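(* Let $(M,g)$ be an $n$-dimensional Riemannian manifold with $n\geq 3$, let $f$ be a smooth function on $M$ with $V=\operatorname{grad}(f)$ non-vanishing, and let $\lambda$ be a smooth function on $M$ such that $$\operatorname{Hess}(f)+\operatorname{Ric}=\left(\frac{\operatorname{scal}}{2}+\lambda\right)g .$$ Then $$Q(\operatorname{grad}(f))=-(n-1)\operatorname{grad}(\lambda)-\frac{n-2}{2}\operatorname{grad}(\operatorname{scal}).$$ Moreover, if $Q(\operatorname{grad}(f))=0$, then $$\operatorname{grad}(\lambda)=\operatorname{grad}(\Delta(f))=-\frac{n-2}{2(n-1)}\operatorname{grad}(\operatorname{scal}).$$
   Context: $\operatorname{Ric}$ is the Ricci tensor, $\operatorname{scal}$ the scalar curvature of $g$, $\operatorname{Hess}(f)$ the Hessian of $f$, $\Delta(f)=\operatorname{div}(\operatorname{grad} f)$, and $Q$ is the Ricci operator defined by $g(QX,Y)=\operatorname{Ric}(X,Y)$ for all vector fields $X,Y$. The displayed equation says that $(\operatorname{grad}(f),\lambda)$ is a gradient almost Einstein soliton, i.e. $\frac12\pounds_{V}g+\operatorname{Ric}=(\frac{\operatorname{scal}}{2}+\lambda)g$ with $V=\operatorname{grad} f$. *)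

theory Defs
  imports "HOL-Analysis.Analysis"
begin

text \<open>Local coordinate model of a Riemannian manifold: an open set U of real^'n
 (a chart domain), with metric coefficients g x $ i $ j.\<close>

type_synonym 'n metric = "real^'n \<Rightarrow> real^'n^'n"
type_synonym 'n scalarf = "real^'n \<Rightarrow> real"

definition pd :: "'n::finite \<Rightarrow> 'n scalarf \<Rightarrow> 'n scalarf" where
  "pd i h x = frechet_derivative h (at x) (axis i 1)"

definition smooth_on :: "(real^'n::finite) set \<Rightarrow> 'n scalarf \<Rightarrow> bool" where
  "smooth_on U h \<longleftrightarrow> (\<forall>is::'n list. \<forall>x\<in>U. (foldr pd is h) differentiable (at x))"

definition riemannian_metric_on :: "(real^'n::finite) set \<Rightarrow> 'n metric \<Rightarrow> bool" where
  "riemannian_metric_on U g \<longleftrightarrow>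
     (\<forall>i j. smooth_on U (\<lambda>x. g x $ i $ j)) \<and>
     (\<forall>x\<in>U. transpose (g x) = g x \<and> (\<forall>v. v \<noteq> 0 \<longrightarrow> v \<bullet> (g x *v v) > 0))"

definition ginv :: "'n::finite metric \<Rightarrow> 'n metric" where
  "ginv g x = matrix_inv (g x)"

definition christoffel :: "'n::finite metric \<Rightarrow> 'n \<Rightarrow> 'n \<Rightarrow> 'n \<Rightarrow> 'n scalarf" where
  "christoffel g k i j x = (1/2) * (\<Sum>l\<in>UNIV. ginv g x $ k $ l *
      (pd i (\<lambda>y. g y $ j $ l) x + pd j (\<lambda>y. g y $ i $ l) x - pd l (\<lambda>y. g y $ i $ j) x))"

definition ricci :: "'n::finite metric \<Rightarrow> 'n \<Rightarrow> 'n \<Rightarrow> 'n scalarf" where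
  "ricci g i j x = (\<Sum>k\<in>UNIV. pd k (christoffel g k i j) x - pd j (christoffel g k i k) x
      + (\<Sum>l\<in>UNIV. christoffel g k k l x * christoffel g l i j x
                   - christoffel g k j l x * christoffel g l i k x))"

definition scal :: "'n::finite metric \<Rightarrow> 'n scalarf" where
  "scal g x = (\<Sum>i\<in>UNIV. \<Sum>j\<in>UNIV. ginv g x $ i $ j * ricci g i j x)"

definition hess :: "'n::finite metric \<Rightarrow> 'n scalarf \<Rightarrow> 'n \<Rightarrow> 'n \<Rightarrow> 'n scalarf" where
  "hess g f i j x = pd i (pd j f) x - (\<Sum>k\<in>UNIV. christoffel g k i j x * pd k f x)"

definition grad :: "'n::finite metric \<Rightarrow> 'n scalarf \<Rightarrow> real^'n \<Rightarrow> real^'n" where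
  "grad g f x = (\<chi> i. \<Sum>j\<in>UNIV. ginv g x $ i $ j * pd j f x)"

definition laplacian :: "'n::finite metric \<Rightarrow> 'n scalarf \<Rightarrow> 'n scalarf" where
  "laplacian g f x = (\<Sum>i\<in>UNIV. \<Sum>j\<in>UNIV. ginv g x $ i $ j * hess g f i j x)"

text \<open>Ricci operator Q: g(QX,Y) = Ric(X,Y), i.e. (QX)^i = g^{ij} Ric_{jk} X^k.\<close>
definition ricci_op :: "'n::finite metric \<Rightarrow> real^'n \<Rightarrow> real^'n \<Rightarrow> real^'n" where
  "ricci_op g x X = (\<chi> i. \<Sum>j\<in>UNIV. \<Sum>k\<in>UNIV. ginv g x $ i $ j * ricci g j k x * X $ k)"

end

theory Submission
  imports Defs "HOL-Library.Function_Algebras"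
begin

(* Take the divergence of the soliton equation Hess f + Ric = \<phi> g with \<phi> = scal/2 + \<lambda>.
   By the Ricci identity the divergence of Hess f is d(\<Delta>f) + Ric(grad f), by the contracted
   second Bianchi identity that of Ric is (d scal)/2, and that of \<phi> g is d\<phi>; hence
   Ric(grad f) = d\<lambda> - d(\<Delta>f).  Tracing the equation gives \<Delta>f = n \<phi> - scal, and inserting its
   differential yields Q(grad f) = -(n-1) grad \<lambda> - (n-2)/2 grad scal; when Q(grad f) = 0 the
   remaining claims are linear algebra.  Everything is computed in the chart: the curvature
   identities are polynomial identities in the Christoffel symbols and their partial derivatives
   at a point, which hold once second partial derivatives commute. *)

section \<open>Partial derivatives\<close>

lemma pd_has_derivative:
  assumes "(h has_derivative D) (at x)"
  shows "pd i h x = D (axis i 1)"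
  using frechet_derivative_at[OF assms] unfolding pd_def by simp

lemma has_derivative_cong_open:
  assumes "open U" "x \<in> U" "\<And>y. y \<in> U \<Longrightarrow> a y = b y"
  shows "(a has_derivative D) (at x) \<longleftrightarrow> (b has_derivative D) (at x)"
  using assms has_derivative_transform_within_open by metis

lemma pd_cong_open:
  assumes "open U" "x \<in> U" "\<And>y. y \<in> U \<Longrightarrow> a y = b y"
  shows "pd i a x = pd i b x"
  using has_derivative_cong_open[of U x a b] assms unfolding pd_def frechet_derivative_def by simp

lemma differentiable_cong_open:
  assumes "open U" "x \<in> U" "\<And>y. y \<in> U \<Longrightarrow> a y = b y" "a differentiable (at x)"
  shows "b differentiable (at x)"
  using assms has_derivative_cong_open[of U x a b] unfolding differentiable_def by blast

lemma pd_const [simp]: "pd i (\<lambda>y. c) x = 0"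
  unfolding pd_def by simp

lemma pd_add:
  assumes "a differentiable (at x)" "b differentiable (at x)"
  shows "pd i (\<lambda>y. a y + b y) x = pd i a x + pd i b x"
proof -
  from assms obtain A B where A: "(a has_derivative A) (at x)" and B: "(b has_derivative B) (at x)"
    unfolding differentiable_def by blast
  show ?thesis
    using pd_has_derivative[OF has_derivative_add[OF A B]] pd_has_derivative[OF A] pd_has_derivative[OF B]
    by simp
qed

lemma pd_diff:
  assumes "a differentiable (at x)" "b differentiable (at x)"
  shows "pd i (\<lambda>y. a y - b y) x = pd i a x - pd i b x"
proof -
  from assms obtain A B where A: "(a has_derivative A) (at x)" and B: "(b has_derivative B) (at x)"
    unfolding differentiable_def by blast
  show ?thesis
    using pd_has_derivative[OF has_derivative_diff[OF A B]] pd_has_derivative[OF A] pd_has_derivative[OF B]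
    by simp
qed

lemma pd_mult:
  assumes "a differentiable (at x)" "b differentiable (at x)"
  shows "pd i (\<lambda>y. a y * b y) x = pd i a x * b x + a x * pd i b x"
proof -
  from assms obtain A B where A: "(a has_derivative A) (at x)" and B: "(b has_derivative B) (at x)"
    unfolding differentiable_def by blast
  show ?thesis
    using pd_has_derivative[OF has_derivative_mult[OF A B]] pd_has_derivative[OF A] pd_has_derivative[OF B]
    by simp
qed

lemma pd_sum:
  assumes "finite S" "\<And>k. k \<in> S \<Longrightarrow> h k differentiable (at x)"
  shows "pd i (\<lambda>y. \<Sum>k\<in>S. h k y) x = (\<Sum>k\<in>S. pd i (h k) x)"
proof -
  from assms(2) obtain D where D: "\<And>k. k \<in> S \<Longrightarrow> (h k has_derivative D k) (at x)"
    unfolding differentiable_def by metis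
  show ?thesis
    using pd_has_derivative[OF has_derivative_sum[of S h D, OF D]] pd_has_derivative[OF D] by simp
qed

lemma pd_inverse:
  assumes "a differentiable (at x)" "a x \<noteq> 0"
  shows "pd i (\<lambda>y. inverse (a y)) x = - (pd i a x * (inverse (a x) * inverse (a x)))"
proof -
  from assms(1) obtain A where A: "(a has_derivative A) (at x)"
    unfolding differentiable_def by blast
  show ?thesis
    using pd_has_derivative[OF Deriv.has_derivative_inverse[OF assms(2) A]] pd_has_derivative[OF A]
    by (simp add: field_simps)
qed

section \<open>Smooth functions\<close>

text \<open>Smoothness of finite order, so that closure properties of \<^const>\<open>smooth_on\<close> can be proved
  by induction on the order.\<close>

fun Ck_on :: "(real^'n::finite) set \<Rightarrow> nat \<Rightarrow> 'n scalarf \<Rightarrow> bool" where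
  "Ck_on U 0 h \<longleftrightarrow> (\<forall>x\<in>U. h differentiable (at x))"
| "Ck_on U (Suc k) h \<longleftrightarrow> (\<forall>x\<in>U. h differentiable (at x)) \<and> (\<forall>i. Ck_on U k (pd i h))"

lemma Ck_on_iff_foldr_pd:
  "Ck_on U k h \<longleftrightarrow> (\<forall>is. length is \<le> k \<longrightarrow> (\<forall>x\<in>U. foldr pd is h differentiable (at x)))"
proof (induction k arbitrary: h)
  case 0
  then show ?case by simp
next
  case (Suc k)
  have "(\<forall>is. length is \<le> Suc k \<longrightarrow> (\<forall>x\<in>U. foldr pd is h differentiable (at x)))
    \<longleftrightarrow> (\<forall>x\<in>U. h differentiable (at x)) \<and>
        (\<forall>i is. length is \<le> k \<longrightarrow> (\<forall>x\<in>U. foldr pd is (pd i h) differentiable (at x)))"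
    (is "?l \<longleftrightarrow> ?r")
  proof
    assume l: ?l
    show ?r
    proof (intro conjI allI impI)
      show "\<forall>x\<in>U. h differentiable (at x)" using l[rule_format, of "[]"] by simp
      fix i and "is" :: "'a list"
      assume "length is \<le> k"
      then show "\<forall>x\<in>U. foldr pd is (pd i h) differentiable (at x)"
        using l[rule_format, of "is @ [i]"] by simp
    qed
  next
    assume r: ?r
    show ?l
    proof (intro allI impI)
      fix "is" :: "'a list"
      assume "length is \<le> Suc k"
      then show "\<forall>x\<in>U. foldr pd is h differentiable (at x)"
        using r by (cases "is" rule: rev_cases) auto
    qed
  qed
  then show ?case using Suc.IH by simp
qed

lemma smooth_on_iff_Ck_on: "smooth_on U h \<longleftrightarrow> (\<forall>k. Ck_on U k h)"
  unfolding smooth_on_def Ck_on_iff_foldr_pd by (meson le_refl)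

lemma Ck_on_differentiable: "Ck_on U k h \<Longrightarrow> x \<in> U \<Longrightarrow> h differentiable (at x)"
  by (cases k) auto

lemma Ck_on_Suc_imp: "Ck_on U (Suc k) h \<Longrightarrow> Ck_on U k h"
  by (induction k arbitrary: h) auto

lemma Ck_on_cong_open:
  assumes "open U" "Ck_on U k a" "\<And>y. y \<in> U \<Longrightarrow> a y = b y"
  shows "Ck_on U k b"
  using assms(2,3)
proof (induction k arbitrary: a b)
  case 0
  then show ?case using differentiable_cong_open[OF assms(1) _ "0.prems"(2)] by simp
next
  case (Suc k)
  have "Ck_on U k (pd i b)" for i
  proof (rule Suc.IH)
    show "Ck_on U k (pd i a)" using Suc.prems(1) by simp
    show "pd i a y = pd i b y" if "y \<in> U" for y
      using pd_cong_open[OF assms(1) that Suc.prems(2)] .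
  qed
  moreover have "b differentiable (at x)" if "x \<in> U" for x
    using differentiable_cong_open[OF assms(1) that Suc.prems(2)] Suc.prems(1) that by simp
  ultimately show ?case by simp
qed

lemma Ck_on_const: "Ck_on U k (\<lambda>y. c)"
proof (induction k arbitrary: c)
  case (Suc k)
  have "Ck_on U k (pd i (\<lambda>y. c))" for i
  proof -
    have "pd i (\<lambda>y. c) = (\<lambda>y. 0)" by (simp add: fun_eq_iff)
    then show ?thesis using Suc.IH[of 0] by (simp only:)
  qed
  then show ?case by simp
qed simp

lemma Ck_on_add:
  assumes "open U"
  shows "Ck_on U k a \<Longrightarrow> Ck_on U k b \<Longrightarrow> Ck_on U k (\<lambda>y. a y + b y)"
proof (induction k arbitrary: a b)
  case (Suc k)
  have "Ck_on U k (pd i (\<lambda>y. a y + b y))" for i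
  proof (rule Ck_on_cong_open[OF assms])
    show "Ck_on U k (\<lambda>y. pd i a y + pd i b y)" using Suc.prems by (intro Suc.IH) simp_all
    show "pd i a y + pd i b y = pd i (\<lambda>y. a y + b y) y" if "y \<in> U" for y
      using Suc.prems that by (simp add: pd_add Ck_on_differentiable)
  qed
  then show ?case using Suc.prems by (simp add: Ck_on_differentiable)
qed simp

lemma Ck_on_mult:
  assumes "open U"
  shows "Ck_on U k a \<Longrightarrow> Ck_on U k b \<Longrightarrow> Ck_on U k (\<lambda>y. a y * b y)"
proof (induction k arbitrary: a b)
  case (Suc k)
  have "Ck_on U k (pd i (\<lambda>y. a y * b y))" for i
  proof (rule Ck_on_cong_open[OF assms])
    have "Ck_on U k (pd i a)" "Ck_on U k a" "Ck_on U k (pd i b)" "Ck_on U k b"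
      using Suc.prems Ck_on_Suc_imp by simp_all
    then show "Ck_on U k (\<lambda>y. pd i a y * b y + a y * pd i b y)"
      by (intro Ck_on_add[OF assms] Suc.IH)
    show "pd i a y * b y + a y * pd i b y = pd i (\<lambda>y. a y * b y) y" if "y \<in> U" for y
      using Suc.prems that by (simp add: pd_mult Ck_on_differentiable)
  qed
  then show ?case using Suc.prems by (simp add: Ck_on_differentiable)
qed simp

lemma Ck_on_sum:
  assumes "open U" "finite S" "\<And>j. j \<in> S \<Longrightarrow> Ck_on U k (h j)"
  shows "Ck_on U k (\<lambda>y. \<Sum>j\<in>S. h j y)"
  using assms(2,3)
proof (induction S rule: finite_induct)
  case (insert j S)
  then show ?case by (simp add: Ck_on_add[OF assms(1)])
qed (simp add: Ck_on_const)

lemma Ck_on_prod: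
  assumes "open U" "finite S" "\<And>j. j \<in> S \<Longrightarrow> Ck_on U k (h j)"
  shows "Ck_on U k (\<lambda>y. \<Prod>j\<in>S. h j y)"
  using assms(2,3)
proof (induction S rule: finite_induct)
  case (insert j S)
  then show ?case by (simp add: Ck_on_mult[OF assms(1)])
qed (simp add: Ck_on_const)

lemma Ck_on_inverse:
  assumes "open U"
  shows "Ck_on U k a \<Longrightarrow> (\<forall>y\<in>U. a y \<noteq> 0) \<Longrightarrow> Ck_on U k (\<lambda>y. inverse (a y))"
proof (induction k arbitrary: a)
  case 0
  then show ?case by (simp add: differentiable_inverse)
next
  case (Suc k)
  have "Ck_on U k (pd i (\<lambda>y. inverse (a y)))" for i
  proof (rule Ck_on_cong_open[OF assms])
    have "Ck_on U k (\<lambda>y. inverse (a y))"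
      using Suc.IH[OF Ck_on_Suc_imp[OF Suc.prems(1)] Suc.prems(2)] .
    moreover have "Ck_on U k (pd i a)" using Suc.prems(1) by simp
    ultimately show "Ck_on U k (\<lambda>y. - 1 * (pd i a y * (inverse (a y) * inverse (a y))))"
      by (intro Ck_on_mult[OF assms] Ck_on_const)
    show "- 1 * (pd i a y * (inverse (a y) * inverse (a y))) = pd i (\<lambda>y. inverse (a y)) y"
      if "y \<in> U" for y
      using pd_inverse[OF Ck_on_differentiable[OF Suc.prems(1) that]] Suc.prems(2) that by simp
  qed
  moreover have "(\<lambda>y. inverse (a y)) differentiable (at x)" if "x \<in> U" for x
    using Ck_on_differentiable[OF Suc.prems(1) that] Suc.prems(2) that by (simp add: differentiable_inverse)
  ultimately show ?case by simp
qed

lemma smooth_on_differentiable: "smooth_on U h \<Longrightarrow> x \<in> U \<Longrightarrow> h differentiable (at x)"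
  unfolding smooth_on_iff_Ck_on using Ck_on_differentiable by blast

lemma smooth_on_pd: "smooth_on U h \<Longrightarrow> smooth_on U (pd i h)"
  unfolding smooth_on_iff_Ck_on by (metis Ck_on.simps(2))

lemma smooth_on_cong_open:
  "open U \<Longrightarrow> smooth_on U a \<Longrightarrow> (\<And>y. y \<in> U \<Longrightarrow> a y = b y) \<Longrightarrow> smooth_on U b"
  unfolding smooth_on_iff_Ck_on using Ck_on_cong_open by blast

lemma smooth_on_const: "smooth_on U (\<lambda>y. c)"
  unfolding smooth_on_iff_Ck_on using Ck_on_const by blast

lemma smooth_on_add: "open U \<Longrightarrow> smooth_on U a \<Longrightarrow> smooth_on U b \<Longrightarrow> smooth_on U (\<lambda>y. a y + b y)"
  unfolding smooth_on_iff_Ck_on using Ck_on_add by blast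

lemma smooth_on_mult: "open U \<Longrightarrow> smooth_on U a \<Longrightarrow> smooth_on U b \<Longrightarrow> smooth_on U (\<lambda>y. a y * b y)"
  unfolding smooth_on_iff_Ck_on using Ck_on_mult by blast

lemma smooth_on_diff:
  assumes "open U" "smooth_on U a" "smooth_on U b"
  shows "smooth_on U (\<lambda>y. a y - b y)"
proof -
  have "smooth_on U (\<lambda>y. a y + (- 1) * b y)"
    using assms by (intro smooth_on_add smooth_on_mult smooth_on_const)
  then show ?thesis by simp
qed

lemma smooth_on_sum:
  "open U \<Longrightarrow> finite S \<Longrightarrow> (\<And>j. j \<in> S \<Longrightarrow> smooth_on U (h j)) \<Longrightarrow> smooth_on U (\<lambda>y. \<Sum>j\<in>S. h j y)"
  unfolding smooth_on_iff_Ck_on using Ck_on_sum by blast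

lemma smooth_on_prod:
  "open U \<Longrightarrow> finite S \<Longrightarrow> (\<And>j. j \<in> S \<Longrightarrow> smooth_on U (h j)) \<Longrightarrow> smooth_on U (\<lambda>y. \<Prod>j\<in>S. h j y)"
  unfolding smooth_on_iff_Ck_on using Ck_on_prod by blast

lemma smooth_on_inverse:
  "open U \<Longrightarrow> smooth_on U a \<Longrightarrow> (\<forall>y\<in>U. a y \<noteq> 0) \<Longrightarrow> smooth_on U (\<lambda>y. inverse (a y))"
  unfolding smooth_on_iff_Ck_on using Ck_on_inverse by blast

lemma smooth_on_det:
  assumes "open U" "\<And>i j. smooth_on U (\<lambda>y. A y $ i $ j)"
  shows "smooth_on U (\<lambda>y. det (A y :: real^'n::finite^'n))"
  unfolding det_def using assms
  by (intro smooth_on_sum smooth_on_mult smooth_on_const smooth_on_prod finite_permutations) auto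

section \<open>Symmetry of second partial derivatives\<close>

definition second_difference :: "'n::finite scalarf \<Rightarrow> real^'n \<Rightarrow> 'n \<Rightarrow> 'n \<Rightarrow> real \<Rightarrow> real" where
  "second_difference h x i j t =
     h (x + t *\<^sub>R axis i 1 + t *\<^sub>R axis j 1) - h (x + t *\<^sub>R axis i 1) - h (x + t *\<^sub>R axis j 1) + h x"

lemma second_difference_commute: "second_difference h x i j t = second_difference h x j i t"
  unfolding second_difference_def by (simp add: algebra_simps)

lemma second_difference_mean_value:
  fixes h :: "'n::finite scalarf"
  assumes h: "\<forall>y\<in>U. h differentiable (at y)" and t: "t > 0"
    and inU: "\<And>s. 0 \<le> s \<Longrightarrow> s \<le> t \<Longrightarrow> x + s *\<^sub>R axis i 1 + t *\<^sub>R axis j 1 \<in> U \<and> x + s *\<^sub>R axis i 1 \<in> U"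
  obtains \<xi> where "0 < \<xi>" "\<xi> < t"
    "second_difference h x i j t
       = t * (pd i h (x + \<xi> *\<^sub>R axis i 1 + t *\<^sub>R axis j 1) - pd i h (x + \<xi> *\<^sub>R axis i 1))"
proof -
  define e\<^sub>i e\<^sub>j :: "real^'n" where "e\<^sub>i = axis i 1" and "e\<^sub>j = axis j 1"
  define \<phi> where "\<phi> s = h (x + s *\<^sub>R e\<^sub>i + t *\<^sub>R e\<^sub>j) - h (x + s *\<^sub>R e\<^sub>i)" for s
  define \<phi>' where "\<phi>' s u = frechet_derivative h (at (x + s *\<^sub>R e\<^sub>i + t *\<^sub>R e\<^sub>j)) (u *\<^sub>R e\<^sub>i)
                             - frechet_derivative h (at (x + s *\<^sub>R e\<^sub>i)) (u *\<^sub>R e\<^sub>i)" for s u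
  have "(\<phi> has_derivative \<phi>' s) (at s within {0..t})" if "0 \<le> s" "s \<le> t" for s
  proof -
    have h': "(h has_derivative frechet_derivative h (at y)) (at y)" if "y \<in> U" for y
      using h that frechet_derivative_works by blast
    have "((\<lambda>s. x + s *\<^sub>R e\<^sub>i + t *\<^sub>R e\<^sub>j) has_derivative (\<lambda>u. u *\<^sub>R e\<^sub>i)) (at s within {0..t})"
      "((\<lambda>s. x + s *\<^sub>R e\<^sub>i) has_derivative (\<lambda>u. u *\<^sub>R e\<^sub>i)) (at s within {0..t})"
      by (auto intro!: derivative_eq_intros)
    from has_derivative_diff[OF has_derivative_compose[OF this(1) h'] has_derivative_compose[OF this(2) h']]
    show ?thesis using inU[OF that] unfolding \<phi>_def \<phi>'_def e\<^sub>i_def e\<^sub>j_def by simp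
  qed
  then obtain \<xi> where \<xi>: "0 < \<xi>" "\<xi> < t" and mvt: "\<phi> t - \<phi> 0 = \<phi>' \<xi> t"
    using mvt_simple[of 0 t \<phi> \<phi>'] t by auto
  have "linear (frechet_derivative h (at y))" if "y \<in> U" for y
    using h that frechet_derivative_works has_derivative_linear by blast
  then have "linear (frechet_derivative h (at (x + \<xi> *\<^sub>R e\<^sub>i + t *\<^sub>R e\<^sub>j)))"
    "linear (frechet_derivative h (at (x + \<xi> *\<^sub>R e\<^sub>i)))"
    using inU[of \<xi>] \<xi> unfolding e\<^sub>i_def e\<^sub>j_def by auto
  then have "\<phi>' \<xi> t = t * (pd i h (x + \<xi> *\<^sub>R e\<^sub>i + t *\<^sub>R e\<^sub>j) - pd i h (x + \<xi> *\<^sub>R e\<^sub>i))"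
    unfolding \<phi>'_def pd_def e\<^sub>i_def by (simp add: linear_scale algebra_simps)
  with mvt \<xi> that show ?thesis
    unfolding \<phi>_def second_difference_def e\<^sub>i_def e\<^sub>j_def by simp
qed

lemma linear_approx_difference:
  fixes F :: "'a::real_normed_vector \<Rightarrow> real"
  assumes "linear L"
    and approx: "\<And>y. norm (y - x) < d \<Longrightarrow> \<bar>F y - F x - L (y - x)\<bar> \<le> c * norm (y - x)"
    and "norm (p - x) < d" "norm (q - x) < d"
  shows "\<bar>F p - F q - L (p - q)\<bar> \<le> c * (norm (p - x) + norm (q - x))"
proof -
  have "L (p - q) = L (p - x) - L (q - x)"
    using linear_diff[OF assms(1), of "p - x" "q - x"] by simp
  then show ?thesis
    using approx[OF assms(3)] approx[OF assms(4)] unfolding abs_le_iff distrib_left by linarith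
qed

text \<open>Young's form of Schwarz's theorem, for \<open>h\<close> differentiable near \<open>x\<close> with first partial
  derivatives differentiable at \<open>x\<close>: the mean value theorem turns the second difference into a
  difference of \<open>pd i h\<close>, which is then linearised at \<open>x\<close>.\<close>

lemma second_difference_estimate:
  fixes h :: "'n::finite scalarf"
  assumes U: "open U" "x \<in> U" and h: "\<forall>y\<in>U. h differentiable (at y)"
    and hi: "pd i h differentiable (at x)" and e: "e > 0"
  shows "\<exists>d>0. \<forall>t. 0 < t \<and> t < d \<longrightarrow>
           \<bar>second_difference h x i j t - t\<^sup>2 * pd j (pd i h) x\<bar> \<le> e * t\<^sup>2"
proof -
  define L where "L = frechet_derivative (pd i h) (at x)"
  have L: "(pd i h has_derivative L) (at x)" using hi frechet_derivative_works L_def by blast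
  then have "linear L" using has_derivative_linear by blast
  obtain d1 where d1: "d1 > 0" and lin: "\<And>y. norm (y - x) < d1 \<Longrightarrow>
      \<bar>pd i h y - pd i h x - L (y - x)\<bar> \<le> (e/3) * norm (y - x)"
    using L[unfolded has_derivative_at_alt] e by (metis divide_pos_pos real_norm_def zero_less_numeral)
  obtain r where r: "r > 0" "ball x r \<subseteq> U" using U open_contains_ball by blast
  have ball: "x + v \<in> U" if "norm v < r" for v
  proof -
    have "x + v \<in> ball x r" using that by (simp add: dist_norm)
    with r(2) show ?thesis by blast
  qed
  have "\<bar>second_difference h x i j t - t\<^sup>2 * pd j (pd i h) x\<bar> \<le> e * t\<^sup>2"
    if t: "0 < t" "t < min (d1/2) (r/2)" for t
  proof -
    have small: "norm (s *\<^sub>R axis i 1 + u *\<^sub>R axis j 1 :: real^'n) \<le> 2 * t"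
      "norm (s *\<^sub>R axis i 1 :: real^'n) \<le> t"
      if "0 \<le> s" "s \<le> t" "0 \<le> u" "u \<le> t" for s u :: real
      using that norm_triangle_ineq[of "s *\<^sub>R axis i 1 :: real^'n" "u *\<^sub>R axis j 1"] by auto
    have "x + s *\<^sub>R axis i 1 + t *\<^sub>R axis j 1 \<in> U \<and> x + s *\<^sub>R axis i 1 \<in> U"
      if "0 \<le> s" "s \<le> t" for s
      using ball[of "s *\<^sub>R axis i 1 + t *\<^sub>R axis j 1"] ball[of "s *\<^sub>R axis i 1"] small[OF that, of t] t
      by (simp add: add.assoc)
    then obtain \<xi> where \<xi>: "0 < \<xi>" "\<xi> < t" and mv: "second_difference h x i j t
        = t * (pd i h (x + \<xi> *\<^sub>R axis i 1 + t *\<^sub>R axis j 1) - pd i h (x + \<xi> *\<^sub>R axis i 1))"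
      using second_difference_mean_value[OF h t(1)] by blast
    define p1 p2 where "p1 = x + \<xi> *\<^sub>R axis i 1 + t *\<^sub>R axis j 1" and "p2 = x + \<xi> *\<^sub>R axis i 1"
    have n: "norm (p1 - x) \<le> 2 * t" "norm (p2 - x) \<le> t"
      using small[of \<xi> t] \<xi> t unfolding p1_def p2_def by (simp_all add: add.assoc)
    have "\<bar>pd i h p1 - pd i h p2 - L (p1 - p2)\<bar> \<le> (e/3) * (norm (p1 - x) + norm (p2 - x))"
      using n t by (intro linear_approx_difference[OF \<open>linear L\<close> lin]) auto
    also have "\<dots> \<le> (e/3) * (3 * t)"
      using n e by (intro mult_left_mono) auto
    also have "L (p1 - p2) = t * pd j (pd i h) x"
      using linear_scale[OF \<open>linear L\<close>] unfolding p1_def p2_def L_def pd_def by simp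
    finally have "t * \<bar>pd i h p1 - pd i h p2 - t * pd j (pd i h) x\<bar> \<le> t * (e * t)"
      using t by simp
    moreover have "second_difference h x i j t - t\<^sup>2 * pd j (pd i h) x
        = t * (pd i h p1 - pd i h p2 - t * pd j (pd i h) x)"
      using mv unfolding p1_def p2_def by (simp add: power2_eq_square algebra_simps)
    ultimately show ?thesis using t by (simp add: abs_mult power2_eq_square mult_ac)
  qed
  moreover have "min (d1/2) (r/2) > 0" using d1 r by simp
  ultimately show ?thesis by blast
qed

lemma pd_commute:
  fixes h :: "'n::finite scalarf"
  assumes U: "open U" "x \<in> U" and h: "\<forall>y\<in>U. h differentiable (at y)"
    and "pd i h differentiable (at x)" "pd j h differentiable (at x)"
  shows "pd j (pd i h) x = pd i (pd j h) x"
proof (rule ccontr)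
  let ?c1 = "pd j (pd i h) x" and ?c2 = "pd i (pd j h) x"
  assume "?c1 \<noteq> ?c2"
  then have e: "\<bar>?c1 - ?c2\<bar> / 4 > 0" by simp
  obtain d1 where "d1 > 0" and E1: "\<And>t. 0 < t \<Longrightarrow> t < d1 \<Longrightarrow>
      \<bar>second_difference h x i j t - t\<^sup>2 * ?c1\<bar> \<le> \<bar>?c1 - ?c2\<bar> / 4 * t\<^sup>2"
    using second_difference_estimate[OF U h assms(4) e, of j] by blast
  obtain d2 where "d2 > 0" and E2: "\<And>t. 0 < t \<Longrightarrow> t < d2 \<Longrightarrow>
      \<bar>second_difference h x i j t - t\<^sup>2 * ?c2\<bar> \<le> \<bar>?c1 - ?c2\<bar> / 4 * t\<^sup>2"
    using second_difference_estimate[OF U h assms(5) e, of i] second_difference_commute by metis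
  define t where "t = min d1 d2 / 2"
  have t: "0 < t" "t < d1" "t < d2" using \<open>d1 > 0\<close> \<open>d2 > 0\<close> by (auto simp: t_def)
  let ?\<Delta> = "second_difference h x i j t"
  have "t\<^sup>2 * \<bar>?c1 - ?c2\<bar> = \<bar>t\<^sup>2 * (?c1 - ?c2)\<bar>"
    by (simp add: abs_mult)
  also have "\<dots> = \<bar>(?\<Delta> - t\<^sup>2 * ?c2) - (?\<Delta> - t\<^sup>2 * ?c1)\<bar>"
    by (simp add: algebra_simps)
  also have "\<dots> \<le> \<bar>?\<Delta> - t\<^sup>2 * ?c2\<bar> + \<bar>?\<Delta> - t\<^sup>2 * ?c1\<bar>"
    by (rule abs_triangle_ineq4)
  also have "\<dots> \<le> \<bar>?c1 - ?c2\<bar> / 4 * t\<^sup>2 + \<bar>?c1 - ?c2\<bar> / 4 * t\<^sup>2"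
    using E1[OF t(1,2)] E2[OF t(1,3)] by (rule add_mono[rotated])
  also have "\<dots> = t\<^sup>2 * (\<bar>?c1 - ?c2\<bar> / 2)"
    by simp
  finally show False using t e by simp
qed

section \<open>The metric in a chart\<close>

locale riemannian_chart =
  fixes U :: "(real^'n::finite) set" and g :: "'n metric"
  assumes open_U: "open U" and riemannian: "riemannian_metric_on U g"
begin

lemma metric_smooth [simp]: "smooth_on U (\<lambda>y. g y $ a $ b)"
  using riemannian unfolding riemannian_metric_on_def by blast

lemma metric_transpose: "y \<in> U \<Longrightarrow> transpose (g y) = g y"
  using riemannian unfolding riemannian_metric_on_def by blast

lemma metric_sym: "y \<in> U \<Longrightarrow> g y $ a $ b = g y $ b $ a"
  using arg_cong[OF metric_transpose, of y "\<lambda>M. M $ b $ a"] by (simp add: transpose_def)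

lemma metric_invertible:
  assumes "y \<in> U"
  shows "invertible (g y)"
proof -
  have pos: "v \<noteq> 0 \<Longrightarrow> v \<bullet> (g y *v v) > 0" for v
    using riemannian assms unfolding riemannian_metric_on_def by blast
  have "inj ((*v) (g y))"
  proof (rule injI)
    fix u v assume "g y *v u = g y *v v"
    then have "g y *v (u - v) = 0" by (simp add: matrix_vector_mult_diff_distrib)
    then show "u = v" using pos[of "u - v"] by fastforce
  qed
  then obtain B where "B ** g y = mat 1" using matrix_left_invertible_injective by blast
  then show ?thesis unfolding invertible_def using matrix_left_right_inverse by blast
qed

lemma metric_ginv: "y \<in> U \<Longrightarrow> g y ** ginv g y = mat 1 \<and> ginv g y ** g y = mat 1"
  using metric_invertible[unfolded invertible_def] unfolding ginv_def matrix_inv_def by (rule someI_ex)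

lemma ginv_metric_contract: "y \<in> U \<Longrightarrow> (\<Sum>b\<in>UNIV. ginv g y $ a $ b * g y $ b $ c) = (if a = c then 1 else 0)"
proof -
  assume "y \<in> U"
  then have "(ginv g y ** g y) $ a $ c = mat 1 $ a $ c" using metric_ginv by simp
  then show ?thesis by (simp add: matrix_matrix_mult_def mat_def)
qed

lemma metric_ginv_contract: "y \<in> U \<Longrightarrow> (\<Sum>b\<in>UNIV. g y $ a $ b * ginv g y $ b $ c) = (if a = c then 1 else 0)"
proof -
  assume "y \<in> U"
  then have "(g y ** ginv g y) $ a $ c = mat 1 $ a $ c" using metric_ginv by simp
  then show ?thesis by (simp add: matrix_matrix_mult_def mat_def)
qed

lemma ginv_sym:
  assumes "y \<in> U"
  shows "ginv g y $ a $ b = ginv g y $ b $ a"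
proof -
  have "transpose (g y ** ginv g y) = mat 1" using metric_ginv[OF assms] by simp
  then have "transpose (ginv g y) ** g y = mat 1"
    using metric_transpose[OF assms] by (simp add: matrix_transpose_mul)
  then have "transpose (ginv g y) = ginv g y"
    using metric_ginv[OF assms] by (metis matrix_mul_assoc matrix_mul_lid matrix_mul_rid)
  then have "transpose (ginv g y) $ b $ a = ginv g y $ b $ a" by simp
  then show ?thesis by (simp add: transpose_def)
qed

lemma ginv_cramer:
  assumes "y \<in> U"
  shows "ginv g y $ k $ j = det (\<chi> i l. if l = k then axis j 1 $ i else g y $ i $ l) * inverse (det (g y))"
proof -
  have "det (g y) \<noteq> 0" using metric_invertible[OF assms] invertible_det_nz by blast
  moreover have "g y *v (ginv g y *v axis j 1) = axis j 1"
    using metric_ginv[OF assms] by (simp add: matrix_vector_mul_assoc)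
  ultimately have "ginv g y *v axis j 1
      = (\<chi> k. det (\<chi> i l. if l = k then axis j 1 $ i else g y $ i $ l) / det (g y))"
    using cramer by blast
  then have "(ginv g y *v axis j 1) $ k
      = det (\<chi> i l. if l = k then axis j 1 $ i else g y $ i $ l) / det (g y)"
    by simp
  then show ?thesis by (simp add: matrix_vector_mult_basis column_def divide_inverse)
qed

lemma ginv_smooth [simp]: "smooth_on U (\<lambda>y. ginv g y $ a $ b)"
proof (rule smooth_on_cong_open[OF open_U _ ginv_cramer[symmetric]])
  have "smooth_on U (\<lambda>y. det (\<chi> i l. if l = a then axis b 1 $ i else g y $ i $ l))"
  proof (rule smooth_on_det[OF open_U])
    fix i l
    show "smooth_on U (\<lambda>y. (\<chi> i l. if l = a then axis b 1 $ i else g y $ i $ l) $ i $ l)"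
      by (cases "l = a") (simp_all add: smooth_on_const)
  qed
  moreover have "smooth_on U (\<lambda>y. inverse (det (g y)))"
    using metric_invertible invertible_det_nz
    by (intro smooth_on_inverse smooth_on_det open_U metric_smooth) auto
  ultimately show "smooth_on U (\<lambda>y. det (\<chi> i l. if l = a then axis b 1 $ i else g y $ i $ l)
      * inverse (det (g y)))"
    by (rule smooth_on_mult[OF open_U])
qed

end

section \<open>Tensor calculus at a point\<close>

text \<open>The arguments are the values at one point of \<open>\<Gamma> k i j = \<Gamma>\<^sup>k\<^sub>i\<^sub>j\<close>,
  \<open>d\<Gamma> l k i j = \<partial>\<^sub>l \<Gamma>\<^sup>k\<^sub>i\<^sub>j\<close>, \<open>dd\<Gamma> m l k i j = \<partial>\<^sub>m \<partial>\<^sub>l \<Gamma>\<^sup>k\<^sub>i\<^sub>j\<close>, of the metric \<open>G\<close>, its inverse \<open>H\<close>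
  and \<open>dG c a b = \<partial>\<^sub>c g\<^sub>a\<^sub>b\<close>; derivative indices come first.  Then \<open>riem \<Gamma> d\<Gamma> a b c d\<close> is
  \<open>R\<^sup>a\<^sub>b\<^sub>c\<^sub>d\<close>, \<open>ric \<Gamma> d\<Gamma> b d = R\<^sup>a\<^sub>b\<^sub>a\<^sub>d\<close>, \<open>driem\<close> and \<open>dric\<close> are their partial derivatives,
  \<open>nabla_riem \<Gamma> d\<Gamma> dd\<Gamma> e a b c d = \<nabla>\<^sub>e R\<^sup>a\<^sub>b\<^sub>c\<^sub>d\<close>, and \<open>nabla2 \<Gamma> T dT e b d = \<nabla>\<^sub>e T\<^sub>b\<^sub>d\<close> for a
  2-tensor with values \<open>T\<close> and partial derivatives \<open>dT\<close>.  For the Hessian, \<open>f1\<close>, \<open>f2\<close>, \<open>f3\<close> are the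
  partial derivatives of order one to three of a function.\<close>

type_synonym 'n tensor2 = "'n \<Rightarrow> 'n \<Rightarrow> real"
type_synonym 'n tensor3 = "'n \<Rightarrow> 'n \<Rightarrow> 'n \<Rightarrow> real"
type_synonym 'n tensor4 = "'n \<Rightarrow> 'n \<Rightarrow> 'n \<Rightarrow> 'n \<Rightarrow> real"
type_synonym 'n tensor5 = "'n \<Rightarrow> 'n \<Rightarrow> 'n \<Rightarrow> 'n \<Rightarrow> 'n \<Rightarrow> real"

lemma if_zero_mult [simp]: "(if P then x else 0) * (y::'a::mult_zero) = (if P then x * y else 0)"
  by simp

lemma mult_if_zero [simp]: "(y::'a::mult_zero) * (if P then x else 0) = (if P then y * x else 0)"
  by simp

lemma sum_swap13: "(\<Sum>x\<in>UNIV. \<Sum>y\<in>UNIV. \<Sum>z\<in>UNIV. F x y z) = (\<Sum>z\<in>UNIV. \<Sum>y\<in>UNIV. \<Sum>x\<in>UNIV. (F x y z :: real))"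
proof -
  have "(\<Sum>x\<in>UNIV. \<Sum>y\<in>UNIV. \<Sum>z\<in>UNIV. F x y z) = (\<Sum>x\<in>UNIV. \<Sum>z\<in>UNIV. \<Sum>y\<in>UNIV. F x y z)"
    by (rule sum.cong[OF refl]) (rule sum.swap)
  also have "\<dots> = (\<Sum>z\<in>UNIV. \<Sum>x\<in>UNIV. \<Sum>y\<in>UNIV. F x y z)" by (rule sum.swap)
  also have "\<dots> = (\<Sum>z\<in>UNIV. \<Sum>y\<in>UNIV. \<Sum>x\<in>UNIV. F x y z)"
    by (rule sum.cong[OF refl]) (rule sum.swap)
  finally show ?thesis .
qed

lemma sum_swap23: "(\<Sum>x\<in>UNIV. \<Sum>y\<in>UNIV. \<Sum>z\<in>UNIV. F x y z) = (\<Sum>x\<in>UNIV. \<Sum>z\<in>UNIV. \<Sum>y\<in>UNIV. (F x y z :: real))"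
  by (rule sum.cong[OF refl]) (rule sum.swap)

lemma sum_rotate3: "(\<Sum>x\<in>UNIV. \<Sum>y\<in>UNIV. \<Sum>z\<in>UNIV. F x y z) = (\<Sum>z\<in>UNIV. \<Sum>x\<in>UNIV. \<Sum>y\<in>UNIV. (F x y z :: real))"
proof -
  have "(\<Sum>x\<in>UNIV. \<Sum>y\<in>UNIV. \<Sum>z\<in>UNIV. F x y z) = (\<Sum>x\<in>UNIV. \<Sum>z\<in>UNIV. \<Sum>y\<in>UNIV. F x y z)"
    by (rule sum_swap23)
  also have "\<dots> = (\<Sum>z\<in>UNIV. \<Sum>x\<in>UNIV. \<Sum>y\<in>UNIV. F x y z)" by (rule sum.swap)
  finally show ?thesis .
qed

definition riem :: "'n::finite tensor3 \<Rightarrow> 'n tensor4 \<Rightarrow> 'n \<Rightarrow> 'n \<Rightarrow> 'n \<Rightarrow> 'n \<Rightarrow> real" where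
  "riem \<Gamma> d\<Gamma> a b c d = d\<Gamma> c a d b - d\<Gamma> d a c b + (\<Sum>p\<in>UNIV. \<Gamma> a c p * \<Gamma> p d b - \<Gamma> a d p * \<Gamma> p c b)"

definition driem :: "'n::finite tensor3 \<Rightarrow> 'n tensor4 \<Rightarrow> 'n tensor5 \<Rightarrow> 'n \<Rightarrow> 'n \<Rightarrow> 'n \<Rightarrow> 'n \<Rightarrow> 'n \<Rightarrow> real" where
  "driem \<Gamma> d\<Gamma> dd\<Gamma> e a b c d = dd\<Gamma> e c a d b - dd\<Gamma> e d a c b
     + (\<Sum>p\<in>UNIV. d\<Gamma> e a c p * \<Gamma> p d b + \<Gamma> a c p * d\<Gamma> e p d b - d\<Gamma> e a d p * \<Gamma> p c b - \<Gamma> a d p * d\<Gamma> e p c b)"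

definition nabla_riem :: "'n::finite tensor3 \<Rightarrow> 'n tensor4 \<Rightarrow> 'n tensor5 \<Rightarrow> 'n \<Rightarrow> 'n \<Rightarrow> 'n \<Rightarrow> 'n \<Rightarrow> 'n \<Rightarrow> real" where
  "nabla_riem \<Gamma> d\<Gamma> dd\<Gamma> e a b c d = driem \<Gamma> d\<Gamma> dd\<Gamma> e a b c d
     + (\<Sum>p\<in>UNIV. \<Gamma> a e p * riem \<Gamma> d\<Gamma> p b c d - \<Gamma> p e b * riem \<Gamma> d\<Gamma> a p c d
                  - \<Gamma> p e c * riem \<Gamma> d\<Gamma> a b p d - \<Gamma> p e d * riem \<Gamma> d\<Gamma> a b c p)"

lemma riem_antisym: "riem \<Gamma> d\<Gamma> a b c d = - riem \<Gamma> d\<Gamma> a b d c"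
  unfolding riem_def by (simp add: sum_subtractf sum_negf[symmetric] algebra_simps)

lemma driem_antisym: "driem \<Gamma> d\<Gamma> dd\<Gamma> e a b c d = - driem \<Gamma> d\<Gamma> dd\<Gamma> e a b d c"
  unfolding driem_def by (simp add: sum_subtractf sum.distrib algebra_simps)

lemma nabla_riem_antisym: "nabla_riem \<Gamma> d\<Gamma> dd\<Gamma> e a b c d = - nabla_riem \<Gamma> d\<Gamma> dd\<Gamma> e a b d c"
proof -
  have "riem \<Gamma> d\<Gamma> p b d c = - riem \<Gamma> d\<Gamma> p b c d" "riem \<Gamma> d\<Gamma> a p d c = - riem \<Gamma> d\<Gamma> a p c d"
    "riem \<Gamma> d\<Gamma> a b p c = - riem \<Gamma> d\<Gamma> a b c p" "riem \<Gamma> d\<Gamma> a b d p = - riem \<Gamma> d\<Gamma> a b p d" for p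
    by (rule riem_antisym)+
  then show ?thesis
    unfolding nabla_riem_def driem_antisym[of \<Gamma> d\<Gamma> dd\<Gamma> e a b c d]
    by (simp add: sum_negf[symmetric] algebra_simps)
qed

definition ric :: "'n::finite tensor3 \<Rightarrow> 'n tensor4 \<Rightarrow> 'n \<Rightarrow> 'n \<Rightarrow> real" where
  "ric \<Gamma> d\<Gamma> b d = (\<Sum>a\<in>UNIV. riem \<Gamma> d\<Gamma> a b a d)"

definition dric :: "'n::finite tensor3 \<Rightarrow> 'n tensor4 \<Rightarrow> 'n tensor5 \<Rightarrow> 'n \<Rightarrow> 'n \<Rightarrow> 'n \<Rightarrow> real" where
  "dric \<Gamma> d\<Gamma> dd\<Gamma> e b d = (\<Sum>a\<in>UNIV. driem \<Gamma> d\<Gamma> dd\<Gamma> e a b a d)"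

definition nabla2 :: "'n::finite tensor3 \<Rightarrow> 'n tensor2 \<Rightarrow> 'n tensor3 \<Rightarrow> 'n \<Rightarrow> 'n \<Rightarrow> 'n \<Rightarrow> real" where
  "nabla2 \<Gamma> T dT e b d = dT e b d - (\<Sum>p\<in>UNIV. \<Gamma> p e b * T p d + \<Gamma> p e d * T b p)"

lemma nabla2_add:
  "nabla2 \<Gamma> T dT e b d + nabla2 \<Gamma> T' dT' e b d
     = nabla2 \<Gamma> (\<lambda>b d. T b d + T' b d) (\<lambda>e b d. dT e b d + dT' e b d) e b d"
  unfolding nabla2_def by (simp add: sum.distrib algebra_simps)

lemma contract_nabla_riem: "(\<Sum>a\<in>UNIV. nabla_riem \<Gamma> d\<Gamma> dd\<Gamma> e a b a d) = nabla2 \<Gamma> (ric \<Gamma> d\<Gamma>) (dric \<Gamma> d\<Gamma> dd\<Gamma>) e b d"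
proof -
  let ?R = "riem \<Gamma> d\<Gamma>"
  have "(\<Sum>a\<in>UNIV. nabla_riem \<Gamma> d\<Gamma> dd\<Gamma> e a b a d) = (\<Sum>a\<in>UNIV. driem \<Gamma> d\<Gamma> dd\<Gamma> e a b a d)
     + (\<Sum>a\<in>UNIV. \<Sum>p\<in>UNIV. \<Gamma> a e p * ?R p b a d) - (\<Sum>a\<in>UNIV. \<Sum>p\<in>UNIV. \<Gamma> p e b * ?R a p a d)
     - (\<Sum>a\<in>UNIV. \<Sum>p\<in>UNIV. \<Gamma> p e a * ?R a b p d) - (\<Sum>a\<in>UNIV. \<Sum>p\<in>UNIV. \<Gamma> p e d * ?R a b a p)"
    by (simp add: nabla_riem_def sum.distrib sum_subtractf)
  moreover have "(\<Sum>a\<in>UNIV. \<Sum>p\<in>UNIV. \<Gamma> p e a * ?R a b p d) = (\<Sum>a\<in>UNIV. \<Sum>p\<in>UNIV. \<Gamma> a e p * ?R p b a d)"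
    by (rule sum.swap)
  moreover have "(\<Sum>a\<in>UNIV. \<Sum>p\<in>UNIV. \<Gamma> p e b * ?R a p a d) = (\<Sum>p\<in>UNIV. \<Gamma> p e b * ric \<Gamma> d\<Gamma> p d)"
    unfolding ric_def sum_distrib_left by (rule sum.swap)
  moreover have "(\<Sum>a\<in>UNIV. \<Sum>p\<in>UNIV. \<Gamma> p e d * ?R a b a p) = (\<Sum>p\<in>UNIV. \<Gamma> p e d * ric \<Gamma> d\<Gamma> b p)"
    unfolding ric_def sum_distrib_left by (rule sum.swap)
  ultimately show ?thesis unfolding nabla2_def dric_def by (simp add: sum.distrib)
qed

lemma deriv_trace_eq_trace_nabla2:
  fixes H :: "'n::finite tensor2"
  assumes dH: "\<And>e b d. dH e b d = - (\<Sum>p\<in>UNIV. H b p * \<Gamma> d e p + \<Gamma> b e p * H p d)"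
  shows "(\<Sum>b\<in>UNIV. \<Sum>d\<in>UNIV. dH e b d * T b d + H b d * dT e b d)
       = (\<Sum>b\<in>UNIV. \<Sum>d\<in>UNIV. H b d * nabla2 \<Gamma> T dT e b d)"
proof -
  have L: "(\<Sum>b\<in>UNIV. \<Sum>d\<in>UNIV. dH e b d * T b d + H b d * dT e b d)
     = (\<Sum>b\<in>UNIV. \<Sum>d\<in>UNIV. H b d * dT e b d)
       - (\<Sum>b\<in>UNIV. \<Sum>d\<in>UNIV. \<Sum>p\<in>UNIV. H b p * \<Gamma> d e p * T b d)
       - (\<Sum>b\<in>UNIV. \<Sum>d\<in>UNIV. \<Sum>p\<in>UNIV. \<Gamma> b e p * H p d * T b d)"
    by (simp add: dH sum.distrib sum_subtractf sum_distrib_right sum_distrib_left algebra_simps)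
  have R: "(\<Sum>b\<in>UNIV. \<Sum>d\<in>UNIV. H b d * nabla2 \<Gamma> T dT e b d)
     = (\<Sum>b\<in>UNIV. \<Sum>d\<in>UNIV. H b d * dT e b d)
       - (\<Sum>b\<in>UNIV. \<Sum>d\<in>UNIV. \<Sum>p\<in>UNIV. H b d * \<Gamma> p e b * T p d)
       - (\<Sum>b\<in>UNIV. \<Sum>d\<in>UNIV. \<Sum>p\<in>UNIV. H b d * \<Gamma> p e d * T b p)"
    by (simp add: nabla2_def sum.distrib sum_subtractf sum_distrib_left sum_distrib_right algebra_simps)
  have 1: "(\<Sum>b\<in>UNIV. \<Sum>d\<in>UNIV. \<Sum>p\<in>UNIV. H b d * \<Gamma> p e d * T b p)
         = (\<Sum>b\<in>UNIV. \<Sum>d\<in>UNIV. \<Sum>p\<in>UNIV. H b p * \<Gamma> d e p * T b d)"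
    by (rule sum_swap23)
  have 2: "(\<Sum>b\<in>UNIV. \<Sum>d\<in>UNIV. \<Sum>p\<in>UNIV. H b d * \<Gamma> p e b * T p d)
         = (\<Sum>b\<in>UNIV. \<Sum>d\<in>UNIV. \<Sum>p\<in>UNIV. \<Gamma> b e p * H p d * T b d)"
    by (subst sum_swap13) (simp add: mult_ac)
  show ?thesis using L R 1 2 by simp
qed

lemma metric_compatibility:
  fixes G H :: "'n::finite tensor2" and dG \<Gamma> :: "'n tensor3"
  assumes Gsym: "\<And>a b. G a b = G b a" and Hsym: "\<And>a b. H a b = H b a"
    and HG: "\<And>a c. (\<Sum>b\<in>UNIV. H a b * G b c) = (if a = c then 1 else 0)"
    and dGsym: "\<And>c a b. dG c a b = dG c b a"
    and Gadef: "\<And>k i j. \<Gamma> k i j = 1/2 * (\<Sum>l\<in>UNIV. H k l * (dG i j l + dG j i l - dG l i j))"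
  shows "dG c a b = (\<Sum>p\<in>UNIV. \<Gamma> p c a * G p b + \<Gamma> p c b * G a p)"
proof -
  have low: "(\<Sum>p\<in>UNIV. \<Gamma> p c a * G p b) = 1/2 * (dG c a b + dG a c b - dG b c a)" for c a b
  proof -
    have "(\<Sum>p\<in>UNIV. \<Gamma> p c a * G p b) = 1/2 * (\<Sum>p\<in>UNIV. \<Sum>l\<in>UNIV. H p l * (dG c a l + dG a c l - dG l c a) * G p b)"
      by (simp add: Gadef sum_distrib_left sum_distrib_right mult.assoc)
    also have "\<dots> = 1/2 * (\<Sum>l\<in>UNIV. (dG c a l + dG a c l - dG l c a) * (\<Sum>p\<in>UNIV. H l p * G p b))"
      by (subst sum.swap) (simp add: sum_distrib_left sum_distrib_right sum_divide_distrib Hsym mult_ac)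
    also have "\<dots> = 1/2 * (dG c a b + dG a c b - dG b c a)"
      by (simp add: HG)
    finally show ?thesis .
  qed
  have "(\<Sum>p\<in>UNIV. \<Gamma> p c a * G p b + \<Gamma> p c b * G a p) = (\<Sum>p\<in>UNIV. \<Gamma> p c a * G p b) + (\<Sum>p\<in>UNIV. \<Gamma> p c b * G p a)"
    by (simp add: sum.distrib Gsym[of a])
  also have "\<dots> = dG c a b" using low[of c a b] low[of c b a] dGsym[of c a b] by simp
  finally show ?thesis by simp
qed

lemma inverse_metric_deriv:
  fixes G H :: "'n::finite tensor2" and dG \<Gamma> dH :: "'n tensor3"
  assumes GH: "\<And>a c. (\<Sum>b\<in>UNIV. G a b * H b c) = (if a = c then 1 else 0)"
    and HG: "\<And>a c. (\<Sum>b\<in>UNIV. H a b * G b c) = (if a = c then 1 else 0)"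
    and dHG: "\<And>c a b. (\<Sum>l\<in>UNIV. dH c a l * G l b + H a l * dG c l b) = 0"
    and compat: "\<And>c a b. dG c a b = (\<Sum>p\<in>UNIV. \<Gamma> p c a * G p b + \<Gamma> p c b * G a p)"
  shows "dH c a m = - (\<Sum>p\<in>UNIV. H a p * \<Gamma> m c p + \<Gamma> a c p * H p m)"
proof -
  have "dH c a m = (\<Sum>b\<in>UNIV. (\<Sum>l\<in>UNIV. dH c a l * G l b) * H b m)"
  proof -
    have "(\<Sum>b\<in>UNIV. (\<Sum>l\<in>UNIV. dH c a l * G l b) * H b m) = (\<Sum>l\<in>UNIV. dH c a l * (\<Sum>b\<in>UNIV. G l b * H b m))"
      by (simp add: sum_distrib_left sum_distrib_right mult.assoc) (rule sum.swap)
    then show ?thesis by (simp add: GH)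
  qed
  also have "\<dots> = - (\<Sum>b\<in>UNIV. (\<Sum>l\<in>UNIV. H a l * dG c l b) * H b m)"
  proof -
    have "\<And>b. (\<Sum>l\<in>UNIV. dH c a l * G l b) = - (\<Sum>l\<in>UNIV. H a l * dG c l b)"
      using dHG by (simp add: sum.distrib eq_neg_iff_add_eq_0)
    then show ?thesis by (simp add: sum_negf)
  qed
  also have "(\<Sum>b\<in>UNIV. (\<Sum>l\<in>UNIV. H a l * dG c l b) * H b m)
      = (\<Sum>b\<in>UNIV. \<Sum>l\<in>UNIV. \<Sum>p\<in>UNIV. H a l * \<Gamma> p c l * G p b * H b m)
      + (\<Sum>b\<in>UNIV. \<Sum>l\<in>UNIV. \<Sum>p\<in>UNIV. H a l * G l p * \<Gamma> p c b * H b m)"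
    by (simp add: compat sum.distrib sum_distrib_left sum_distrib_right algebra_simps)
  also have "(\<Sum>b\<in>UNIV. \<Sum>l\<in>UNIV. \<Sum>p\<in>UNIV. H a l * \<Gamma> p c l * G p b * H b m) = (\<Sum>p\<in>UNIV. H a p * \<Gamma> m c p)"
  proof -
    have "(\<Sum>b\<in>UNIV. \<Sum>l\<in>UNIV. \<Sum>p\<in>UNIV. H a l * \<Gamma> p c l * G p b * H b m)
        = (\<Sum>l\<in>UNIV. \<Sum>p\<in>UNIV. H a l * \<Gamma> p c l * (\<Sum>b\<in>UNIV. G p b * H b m))"
      by (subst sum_rotate3[symmetric]) (simp add: sum_distrib_left mult_ac)
    then show ?thesis by (simp add: GH)
  qed
  also have "(\<Sum>b\<in>UNIV. \<Sum>l\<in>UNIV. \<Sum>p\<in>UNIV. H a l * G l p * \<Gamma> p c b * H b m) = (\<Sum>p\<in>UNIV. \<Gamma> a c p * H p m)"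
  proof -
    have "(\<Sum>b\<in>UNIV. \<Sum>l\<in>UNIV. \<Sum>p\<in>UNIV. H a l * G l p * \<Gamma> p c b * H b m)
        = (\<Sum>b\<in>UNIV. \<Sum>p\<in>UNIV. (\<Sum>l\<in>UNIV. H a l * G l p) * \<Gamma> p c b * H b m)"
      by (subst sum_swap23) (simp add: sum_distrib_right sum_distrib_left mult_ac)
    then show ?thesis by (simp add: HG mult.assoc)
  qed
  finally show ?thesis by (simp add: sum.distrib)
qed

definition riem_low :: "'n::finite tensor2 \<Rightarrow> 'n tensor3 \<Rightarrow> 'n tensor4 \<Rightarrow> 'n tensor4" where
  "riem_low G \<Gamma> d\<Gamma> q b c d = (\<Sum>h\<in>UNIV. G q h * riem \<Gamma> d\<Gamma> h b c d)"

lemma riem_low_raise: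
  assumes HG: "\<And>a c. (\<Sum>b\<in>UNIV. H a b * G b c) = (if a = c then 1 else 0)"
  shows "(\<Sum>q\<in>UNIV. H x q * riem_low G \<Gamma> d\<Gamma> q b c d) = riem \<Gamma> d\<Gamma> x b c d"
proof -
  have "(\<Sum>q\<in>UNIV. H x q * riem_low G \<Gamma> d\<Gamma> q b c d) = (\<Sum>h\<in>UNIV. (\<Sum>q\<in>UNIV. H x q * G q h) * riem \<Gamma> d\<Gamma> h b c d)"
    unfolding riem_low_def by (simp add: sum_distrib_left sum_distrib_right mult.assoc) (rule sum.swap)
  then show ?thesis by (simp add: HG)
qed

text \<open>\<open>R\<^sub>h\<^sub>b\<^sub>c\<^sub>d + R\<^sub>b\<^sub>h\<^sub>c\<^sub>d = \<partial>\<^sub>c\<partial>\<^sub>d g\<^sub>h\<^sub>b - \<partial>\<^sub>d\<partial>\<^sub>c g\<^sub>h\<^sub>b\<close>, after differentiating metric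
  compatibility once more.\<close>

lemma riem_lowered_antisym:
  fixes G :: "'n::finite tensor2" and dG \<Gamma> :: "'n tensor3" and ddG d\<Gamma> :: "'n tensor4"
  assumes Gsym: "\<And>a b. G a b = G b a"
    and compat: "\<And>c a b. dG c a b = (\<Sum>p\<in>UNIV. \<Gamma> p c a * G p b + \<Gamma> p c b * G a p)"
    and dcompat: "\<And>d c a b. ddG d c a b = (\<Sum>p\<in>UNIV. d\<Gamma> d p c a * G p b + \<Gamma> p c a * dG d p b
                                    + d\<Gamma> d p c b * G a p + \<Gamma> p c b * dG d a p)"
    and ddGsym: "\<And>d c a b. ddG d c a b = ddG c d a b"
  shows "riem_low G \<Gamma> d\<Gamma> h b c d = - riem_low G \<Gamma> d\<Gamma> b h c d"
proof -
  define E1 where "E1 = (\<Sum>p\<in>UNIV. d\<Gamma> c p d h * G p b) - (\<Sum>p\<in>UNIV. d\<Gamma> d p c h * G p b)"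
  define E2 where "E2 = (\<Sum>p\<in>UNIV. d\<Gamma> c p d b * G h p) - (\<Sum>p\<in>UNIV. d\<Gamma> d p c b * G h p)"
  define CH1 where "CH1 = (\<Sum>p\<in>UNIV. \<Sum>q\<in>UNIV. G h p * \<Gamma> p c q * \<Gamma> q d b)"
  define CH2 where "CH2 = (\<Sum>p\<in>UNIV. \<Sum>q\<in>UNIV. G h p * \<Gamma> p d q * \<Gamma> q c b)"
  define CB1 where "CB1 = (\<Sum>p\<in>UNIV. \<Sum>q\<in>UNIV. G b p * \<Gamma> p c q * \<Gamma> q d h)"
  define CB2 where "CB2 = (\<Sum>p\<in>UNIV. \<Sum>q\<in>UNIV. G b p * \<Gamma> p d q * \<Gamma> q c h)"
  define P1 where "P1 = (\<Sum>p\<in>UNIV. \<Sum>q\<in>UNIV. \<Gamma> p d h * \<Gamma> q c p * G q b)"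
  define P2 where "P2 = (\<Sum>p\<in>UNIV. \<Sum>q\<in>UNIV. \<Gamma> p d h * \<Gamma> q c b * G p q)"
  define P3 where "P3 = (\<Sum>p\<in>UNIV. \<Sum>q\<in>UNIV. \<Gamma> p c h * \<Gamma> q d p * G q b)"
  define P4 where "P4 = (\<Sum>p\<in>UNIV. \<Sum>q\<in>UNIV. \<Gamma> p c h * \<Gamma> q d b * G p q)"
  define P5 where "P5 = (\<Sum>p\<in>UNIV. \<Sum>q\<in>UNIV. \<Gamma> p d b * \<Gamma> q c h * G q p)"
  define P6 where "P6 = (\<Sum>p\<in>UNIV. \<Sum>q\<in>UNIV. \<Gamma> p d b * \<Gamma> q c p * G h q)"
  define P7 where "P7 = (\<Sum>p\<in>UNIV. \<Sum>q\<in>UNIV. \<Gamma> p c b * \<Gamma> q d h * G q p)"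
  define P8 where "P8 = (\<Sum>p\<in>UNIV. \<Sum>q\<in>UNIV. \<Gamma> p c b * \<Gamma> q d p * G h q)"
  have R1: "(\<Sum>p\<in>UNIV. G h p * riem \<Gamma> d\<Gamma> p b c d) = E2 + CH1 - CH2"
    unfolding E2_def CH1_def CH2_def riem_def
    by (simp add: sum_distrib_left sum.distrib sum_subtractf algebra_simps)
  have R2: "(\<Sum>p\<in>UNIV. G b p * riem \<Gamma> d\<Gamma> p h c d) = E1 + CB1 - CB2"
    unfolding E1_def CB1_def CB2_def riem_def
    by (simp add: sum_distrib_left sum.distrib sum_subtractf algebra_simps Gsym[of b])
  have Q: "ddG c d h b - ddG d c h b = E1 + E2 + (P1 + P2 - P3 - P4 + P5 + P6 - P7 - P8)"
    unfolding E1_def E2_def P1_def P2_def P3_def P4_def P5_def P6_def P7_def P8_def dcompat compat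
    by (simp add: sum_distrib_left sum_distrib_right sum.distrib sum_subtractf algebra_simps)
  have "ddG c d h b - ddG d c h b = 0" using ddGsym by simp
  moreover have "P2 = P7" unfolding P2_def P7_def by (subst sum.swap) (simp add: Gsym mult_ac)
  moreover have "P4 = P5" unfolding P4_def P5_def by (subst sum.swap) (simp add: Gsym mult_ac)
  moreover have "CH1 = P6" unfolding CH1_def P6_def by (subst sum.swap) (simp add: mult_ac)
  moreover have "CH2 = P8" unfolding CH2_def P8_def by (subst sum.swap) (simp add: mult_ac)
  moreover have "CB1 = P1" unfolding CB1_def P1_def by (subst sum.swap) (simp add: Gsym mult_ac)
  moreover have "CB2 = P3" unfolding CB2_def P3_def by (subst sum.swap) (simp add: Gsym mult_ac)
  ultimately show ?thesis unfolding riem_low_def R1 R2 using Q by linarith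
qed

lemma ginv_trace_riem:
  fixes G H :: "'n::finite tensor2" and \<Gamma> :: "'n tensor3" and d\<Gamma> :: "'n tensor4"
  assumes HG: "\<And>a c. (\<Sum>b\<in>UNIV. H a b * G b c) = (if a = c then 1 else 0)"
    and Hsym: "\<And>a b. H a b = H b a"
    and anti: "\<And>q b c d. riem_low G \<Gamma> d\<Gamma> q b c d = - riem_low G \<Gamma> d\<Gamma> b q c d"
  shows "(\<Sum>b\<in>UNIV. \<Sum>d\<in>UNIV. H b d * riem \<Gamma> d\<Gamma> a b d e) + (\<Sum>h\<in>UNIV. H a h * ric \<Gamma> d\<Gamma> h e) = 0"
proof -
  let ?Rl = "riem_low G \<Gamma> d\<Gamma>"
  have "(\<Sum>b\<in>UNIV. \<Sum>d\<in>UNIV. H b d * riem \<Gamma> d\<Gamma> a b d e)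
      = (\<Sum>b\<in>UNIV. \<Sum>d\<in>UNIV. H b d * (\<Sum>q\<in>UNIV. H a q * ?Rl q b d e))"
    by (simp only: riem_low_raise[OF HG])
  also have "\<dots> = (\<Sum>b\<in>UNIV. \<Sum>d\<in>UNIV. \<Sum>q\<in>UNIV. - (H d b * H a q * ?Rl b q d e))"
    by (subst anti) (simp add: sum_distrib_left sum_negf Hsym mult_ac)
  also have "\<dots> = - (\<Sum>q\<in>UNIV. H a q * (\<Sum>d\<in>UNIV. \<Sum>b\<in>UNIV. H d b * ?Rl b q d e))"
    by (subst sum_swap13) (simp add: sum_distrib_left sum_negf mult_ac)
  also have "\<dots> = - (\<Sum>q\<in>UNIV. H a q * ric \<Gamma> d\<Gamma> q e)"
    by (simp only: riem_low_raise[OF HG] ric_def)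
  finally show ?thesis by simp
qed

lemma trace_riem_eq_0:
  fixes G H :: "'n::finite tensor2" and \<Gamma> :: "'n tensor3" and d\<Gamma> :: "'n tensor4"
  assumes HG: "\<And>a c. (\<Sum>b\<in>UNIV. H a b * G b c) = (if a = c then 1 else 0)"
    and Hsym: "\<And>a b. H a b = H b a"
    and anti: "\<And>q b c d. riem_low G \<Gamma> d\<Gamma> q b c d = - riem_low G \<Gamma> d\<Gamma> b q c d"
  shows "(\<Sum>a\<in>UNIV. riem \<Gamma> d\<Gamma> a a b d) = 0"
proof -
  let ?X = "\<Sum>a\<in>UNIV. \<Sum>q\<in>UNIV. H a q * riem_low G \<Gamma> d\<Gamma> q a b d"
  have "?X = - (\<Sum>q\<in>UNIV. \<Sum>a\<in>UNIV. H q a * riem_low G \<Gamma> d\<Gamma> q a b d)"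
    by (subst anti) (simp add: sum_negf Hsym)
  also have "(\<Sum>q\<in>UNIV. \<Sum>a\<in>UNIV. H q a * riem_low G \<Gamma> d\<Gamma> q a b d) = ?X"
    by (subst sum.swap) (simp add: Hsym)
  finally have "?X = 0" by simp
  then show ?thesis by (simp only: riem_low_raise[OF HG])
qed

lemma ric_sym:
  fixes G H :: "'n::finite tensor2" and \<Gamma> :: "'n tensor3" and d\<Gamma> :: "'n tensor4"
  assumes HG: "\<And>a c. (\<Sum>b\<in>UNIV. H a b * G b c) = (if a = c then 1 else 0)"
    and Hsym: "\<And>a b. H a b = H b a"
    and anti: "\<And>q b c d. riem_low G \<Gamma> d\<Gamma> q b c d = - riem_low G \<Gamma> d\<Gamma> b q c d"
    and Gsym: "\<And>a c b. \<Gamma> a c b = \<Gamma> a b c"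
    and dGsym: "\<And>e a c b. d\<Gamma> e a c b = d\<Gamma> e a b c"
  shows "ric \<Gamma> d\<Gamma> b d = ric \<Gamma> d\<Gamma> d b"
proof -
  have "riem \<Gamma> d\<Gamma> a b a d - riem \<Gamma> d\<Gamma> a d a b = riem \<Gamma> d\<Gamma> a a b d" for a
  proof -
    have "d\<Gamma> a a b d = d\<Gamma> a a d b" "d\<Gamma> b a d a = d\<Gamma> b a a d" "d\<Gamma> d a b a = d\<Gamma> d a a b"
      "\<Gamma> p d b = \<Gamma> p b d" "\<Gamma> p a b = \<Gamma> p b a" "\<Gamma> p a d = \<Gamma> p d a" for p
      using Gsym dGsym by auto
    then show ?thesis unfolding riem_def by (simp add: sum_subtractf)
  qed
  then have "ric \<Gamma> d\<Gamma> b d - ric \<Gamma> d\<Gamma> d b = (\<Sum>a\<in>UNIV. riem \<Gamma> d\<Gamma> a a b d)"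
    unfolding ric_def by (simp add: sum_subtractf[symmetric])
  then show ?thesis using trace_riem_eq_0[OF HG Hsym anti] by simp
qed

definition mprod :: "'n::finite tensor2 \<Rightarrow> 'n tensor2 \<Rightarrow> 'n tensor2" where
  "mprod X Y = (\<lambda>a b. \<Sum>p\<in>UNIV. X a p * Y p b)"

lemma mprod_assoc: "mprod (mprod X Y) Z = mprod X (mprod Y Z)"
  unfolding mprod_def
  by (auto simp: fun_eq_iff sum_distrib_left sum_distrib_right mult.assoc intro: sum.swap)

lemma mprod_add_left: "mprod (X + Y) Z = mprod X Z + mprod Y Z"
  unfolding mprod_def by (auto simp: fun_eq_iff sum.distrib algebra_simps)

lemma mprod_add_right: "mprod X (Y + Z) = mprod X Y + mprod X Z"
  unfolding mprod_def by (auto simp: fun_eq_iff sum.distrib algebra_simps)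

lemma mprod_diff_left: "mprod (X - Y) Z = mprod X Z - mprod Y Z"
  unfolding mprod_def by (auto simp: fun_eq_iff sum_subtractf algebra_simps)

lemma mprod_diff_right: "mprod X (Y - Z) = mprod X Y - mprod X Z"
  unfolding mprod_def by (auto simp: fun_eq_iff sum_subtractf algebra_simps)

text \<open>With the connection matrices \<open>(A\<^sub>c)\<^sup>a\<^sub>b = \<Gamma>\<^sup>a\<^sub>c\<^sub>b\<close> the curvature is the matrix
  \<open>RM c d = \<partial>\<^sub>c A\<^sub>d - \<partial>\<^sub>d A\<^sub>c + [A\<^sub>c, A\<^sub>d]\<close>, and the second Bianchi identity becomes an identity
  in the noncommutative ring of matrices.\<close>

lemma bianchi_matrix_identity:
  fixes A :: "'c \<Rightarrow> 'n::finite tensor2" and dA :: "'c \<Rightarrow> 'c \<Rightarrow> 'n tensor2" and ddA :: "'c \<Rightarrow> 'c \<Rightarrow> 'c \<Rightarrow> 'n tensor2"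
  assumes sym: "\<And>e c d. ddA e c d = ddA c e d"
  defines "RM \<equiv> \<lambda>c d. dA c d - dA d c + mprod (A c) (A d) - mprod (A d) (A c)"
  defines "dRM \<equiv> \<lambda>e c d. ddA e c d - ddA e d c + mprod (dA e c) (A d) + mprod (A c) (dA e d)
                          - mprod (dA e d) (A c) - mprod (A d) (dA e c)"
  shows "(dRM e c d + mprod (A e) (RM c d) - mprod (RM c d) (A e))
       + (dRM c d e + mprod (A c) (RM d e) - mprod (RM d e) (A c))
       + (dRM d e c + mprod (A d) (RM e c) - mprod (RM e c) (A d)) = 0"
proof -
  have s1: "ddA c e d = ddA e c d" "ddA d c e = ddA c d e" "ddA e d c = ddA d e c" using sym by auto
  show ?thesis unfolding RM_def dRM_def
    by (simp add: mprod_add_left mprod_add_right mprod_diff_left mprod_diff_right mprod_assoc s1 algebra_simps)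
qed

lemma christoffel_riem_cyclic:
  assumes Gsym: "\<And>a c b. \<Gamma> a c b = \<Gamma> a b c"
  shows "(\<Sum>p\<in>UNIV. \<Gamma> p e c * riem \<Gamma> d\<Gamma> a b p d + \<Gamma> p e d * riem \<Gamma> d\<Gamma> a b c p)
         + (\<Sum>p\<in>UNIV. \<Gamma> p c d * riem \<Gamma> d\<Gamma> a b p e + \<Gamma> p c e * riem \<Gamma> d\<Gamma> a b d p)
         + (\<Sum>p\<in>UNIV. \<Gamma> p d e * riem \<Gamma> d\<Gamma> a b p c + \<Gamma> p d c * riem \<Gamma> d\<Gamma> a b e p) = 0"
proof -
  have "\<And>p. (\<Gamma> p e c * riem \<Gamma> d\<Gamma> a b p d + \<Gamma> p e d * riem \<Gamma> d\<Gamma> a b c p)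
       + (\<Gamma> p c d * riem \<Gamma> d\<Gamma> a b p e + \<Gamma> p c e * riem \<Gamma> d\<Gamma> a b d p)
       + (\<Gamma> p d e * riem \<Gamma> d\<Gamma> a b p c + \<Gamma> p d c * riem \<Gamma> d\<Gamma> a b e p) = 0"
  proof -
    fix p
    have "\<Gamma> p c e = \<Gamma> p e c" "\<Gamma> p d c = \<Gamma> p c d" "\<Gamma> p d e = \<Gamma> p e d" using Gsym by auto
    moreover have "riem \<Gamma> d\<Gamma> a b d p = - riem \<Gamma> d\<Gamma> a b p d" "riem \<Gamma> d\<Gamma> a b p c = - riem \<Gamma> d\<Gamma> a b c p"
      "riem \<Gamma> d\<Gamma> a b e p = - riem \<Gamma> d\<Gamma> a b p e" by (rule riem_antisym)+
    ultimately show "(\<Gamma> p e c * riem \<Gamma> d\<Gamma> a b p d + \<Gamma> p e d * riem \<Gamma> d\<Gamma> a b c p)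
       + (\<Gamma> p c d * riem \<Gamma> d\<Gamma> a b p e + \<Gamma> p c e * riem \<Gamma> d\<Gamma> a b d p)
       + (\<Gamma> p d e * riem \<Gamma> d\<Gamma> a b p c + \<Gamma> p d c * riem \<Gamma> d\<Gamma> a b e p) = 0" by simp
  qed
  then show ?thesis by (simp add: sum.distrib[symmetric])
qed

lemma second_bianchi:
  fixes \<Gamma> :: "'n::finite tensor3"
  assumes Gsym: "\<And>a c b. \<Gamma> a c b = \<Gamma> a b c"
    and ddsym: "\<And>e f a c b. dd\<Gamma> e f a c b = dd\<Gamma> f e a c b"
  shows "nabla_riem \<Gamma> d\<Gamma> dd\<Gamma> e a b c d + nabla_riem \<Gamma> d\<Gamma> dd\<Gamma> c a b d e + nabla_riem \<Gamma> d\<Gamma> dd\<Gamma> d a b e c = 0"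
proof -
  define A where "A = (\<lambda>c a b. \<Gamma> a c b)"
  define dA where "dA = (\<lambda>e c a b. d\<Gamma> e a c b)"
  define ddA where "ddA = (\<lambda>e f c a b. dd\<Gamma> e f a c b)"
  define RM where "RM = (\<lambda>c d. dA c d - dA d c + mprod (A c) (A d) - mprod (A d) (A c))"
  define dRM where "dRM = (\<lambda>e c d. ddA e c d - ddA e d c + mprod (dA e c) (A d) + mprod (A c) (dA e d)
                          - mprod (dA e d) (A c) - mprod (A d) (dA e c))"
  have symA: "\<And>e c d. ddA e c d = ddA c e d" unfolding ddA_def using ddsym by (simp add: fun_eq_iff)
  have ring: "(dRM e c d + mprod (A e) (RM c d) - mprod (RM c d) (A e))
       + (dRM c d e + mprod (A c) (RM d e) - mprod (RM d e) (A c))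
       + (dRM d e c + mprod (A d) (RM e c) - mprod (RM e c) (A d)) = 0"
    unfolding RM_def dRM_def by (rule bianchi_matrix_identity[OF symA])
  have RMe: "RM c d a b = riem \<Gamma> d\<Gamma> a b c d" for a b c d
    unfolding RM_def riem_def A_def dA_def mprod_def by (simp add: sum_subtractf)
  have dRMe: "dRM e c d a b = driem \<Gamma> d\<Gamma> dd\<Gamma> e a b c d" for e a b c d
    unfolding dRM_def driem_def A_def dA_def ddA_def mprod_def by (simp add: sum_subtractf sum.distrib)
  have DRe: "nabla_riem \<Gamma> d\<Gamma> dd\<Gamma> e a b c d = (dRM e c d + mprod (A e) (RM c d) - mprod (RM c d) (A e)) a b
       - (\<Sum>p\<in>UNIV. \<Gamma> p e c * riem \<Gamma> d\<Gamma> a b p d + \<Gamma> p e d * riem \<Gamma> d\<Gamma> a b c p)" for e a b c d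
  proof -
    have "(\<Sum>p\<in>UNIV. \<Gamma> a e p * riem \<Gamma> d\<Gamma> p b c d - \<Gamma> p e b * riem \<Gamma> d\<Gamma> a p c d
                  - \<Gamma> p e c * riem \<Gamma> d\<Gamma> a b p d - \<Gamma> p e d * riem \<Gamma> d\<Gamma> a b c p)
        = (\<Sum>p\<in>UNIV. \<Gamma> a e p * riem \<Gamma> d\<Gamma> p b c d) - (\<Sum>p\<in>UNIV. riem \<Gamma> d\<Gamma> a p c d * \<Gamma> p e b)
          - (\<Sum>p\<in>UNIV. \<Gamma> p e c * riem \<Gamma> d\<Gamma> a b p d + \<Gamma> p e d * riem \<Gamma> d\<Gamma> a b c p)"
      by (simp add: sum_subtractf sum.distrib mult.commute)
    moreover have "(dRM e c d + mprod (A e) (RM c d) - mprod (RM c d) (A e)) a b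
       = driem \<Gamma> d\<Gamma> dd\<Gamma> e a b c d + (\<Sum>p\<in>UNIV. \<Gamma> a e p * riem \<Gamma> d\<Gamma> p b c d) - (\<Sum>p\<in>UNIV. riem \<Gamma> d\<Gamma> a p c d * \<Gamma> p e b)"
      by (simp add: mprod_def RMe dRMe A_def)
    ultimately show ?thesis unfolding nabla_riem_def by simp
  qed
  have T: "(\<Sum>p\<in>UNIV. \<Gamma> p e c * riem \<Gamma> d\<Gamma> a b p d + \<Gamma> p e d * riem \<Gamma> d\<Gamma> a b c p)
         + (\<Sum>p\<in>UNIV. \<Gamma> p c d * riem \<Gamma> d\<Gamma> a b p e + \<Gamma> p c e * riem \<Gamma> d\<Gamma> a b d p)
         + (\<Sum>p\<in>UNIV. \<Gamma> p d e * riem \<Gamma> d\<Gamma> a b p c + \<Gamma> p d c * riem \<Gamma> d\<Gamma> a b e p) = 0"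
    by (rule christoffel_riem_cyclic[OF Gsym])
  have "0 = (dRM e c d + mprod (A e) (RM c d) - mprod (RM c d) (A e)) a b
       + (dRM c d e + mprod (A c) (RM d e) - mprod (RM d e) (A c)) a b
       + (dRM d e c + mprod (A d) (RM e c) - mprod (RM e c) (A d)) a b"
    using fun_cong[OF fun_cong[OF ring, of a], of b] by simp
  then show ?thesis using T unfolding DRe by linarith
qed

lemma ginv_trace_riem_contract:
  fixes H :: "'n::finite tensor2" and R :: "'n tensor4" and Ric :: "'n tensor2"
  assumes K: "\<And>x y. (\<Sum>b\<in>UNIV. \<Sum>d\<in>UNIV. H b d * R x b d y) + (\<Sum>h\<in>UNIV. H x h * Ric h y) = 0"
  shows "(\<Sum>b\<in>UNIV. \<Sum>d\<in>UNIV. \<Sum>p\<in>UNIV. H b d * c p * R p b d e)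
         + (\<Sum>h\<in>UNIV. \<Sum>p\<in>UNIV. c p * H p h * Ric h e) = 0"
    and "(\<Sum>b\<in>UNIV. \<Sum>d\<in>UNIV. \<Sum>p\<in>UNIV. H b d * c p * R a b d p)
         + (\<Sum>h\<in>UNIV. \<Sum>p\<in>UNIV. H a h * c p * Ric h p) = 0"
proof -
  have "(\<Sum>b\<in>UNIV. \<Sum>d\<in>UNIV. \<Sum>p\<in>UNIV. H b d * c p * R p b d e)
         + (\<Sum>h\<in>UNIV. \<Sum>p\<in>UNIV. c p * H p h * Ric h e)
      = (\<Sum>p\<in>UNIV. c p * ((\<Sum>b\<in>UNIV. \<Sum>d\<in>UNIV. H b d * R p b d e) + (\<Sum>h\<in>UNIV. H p h * Ric h e)))"
    by (subst sum_rotate3, subst (2) sum.swap) (simp add: sum.distrib sum_distrib_left algebra_simps)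
  then show "(\<Sum>b\<in>UNIV. \<Sum>d\<in>UNIV. \<Sum>p\<in>UNIV. H b d * c p * R p b d e)
         + (\<Sum>h\<in>UNIV. \<Sum>p\<in>UNIV. c p * H p h * Ric h e) = 0"
    using K by simp
  have "(\<Sum>b\<in>UNIV. \<Sum>d\<in>UNIV. \<Sum>p\<in>UNIV. H b d * c p * R a b d p)
         + (\<Sum>h\<in>UNIV. \<Sum>p\<in>UNIV. H a h * c p * Ric h p)
      = (\<Sum>p\<in>UNIV. c p * ((\<Sum>b\<in>UNIV. \<Sum>d\<in>UNIV. H b d * R a b d p) + (\<Sum>h\<in>UNIV. H a h * Ric h p)))"
    by (subst sum_rotate3, subst (2) sum.swap) (simp add: sum.distrib sum_distrib_left algebra_simps)
  then show "(\<Sum>b\<in>UNIV. \<Sum>d\<in>UNIV. \<Sum>p\<in>UNIV. H b d * c p * R a b d p)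
         + (\<Sum>h\<in>UNIV. \<Sum>p\<in>UNIV. H a h * c p * Ric h p) = 0"
    using K by simp
qed

lemma ginv_trace_nabla_riem:
  fixes H :: "'n::finite tensor2" and dH :: "'n tensor3" and \<Gamma> :: "'n tensor3" and d\<Gamma> :: "'n tensor4" and dd\<Gamma> :: "'n tensor5"
  defines "R \<equiv> riem \<Gamma> d\<Gamma>" and "dR \<equiv> driem \<Gamma> d\<Gamma> dd\<Gamma>" and "Ric \<equiv> ric \<Gamma> d\<Gamma>" and "dRic \<equiv> dric \<Gamma> d\<Gamma> dd\<Gamma>"
  assumes K: "\<And>a' e. (\<Sum>b\<in>UNIV. \<Sum>d\<in>UNIV. H b d * R a' b d e) + (\<Sum>h\<in>UNIV. H a' h * Ric h e) = 0"
    and dK: "(\<Sum>b\<in>UNIV. \<Sum>d\<in>UNIV. dH a b d * R a' b d e + H b d * dR a a' b d e)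
           + (\<Sum>h\<in>UNIV. dH a a' h * Ric h e + H a' h * dRic a h e) = 0"
    and dH: "\<And>e b d. dH e b d = - (\<Sum>p\<in>UNIV. H b p * \<Gamma> d e p + \<Gamma> b e p * H p d)"
  shows "(\<Sum>b\<in>UNIV. \<Sum>d\<in>UNIV. H b d * nabla_riem \<Gamma> d\<Gamma> dd\<Gamma> a a' b d e) = - (\<Sum>h\<in>UNIV. H a' h * nabla2 \<Gamma> Ric dRic a h e)"
proof -
  define Z1 where "Z1 = (\<Sum>b\<in>UNIV. \<Sum>d\<in>UNIV. \<Sum>p\<in>UNIV. H b d * \<Gamma> a' a p * R p b d e)"
  define Z2 where "Z2 = (\<Sum>b\<in>UNIV. \<Sum>d\<in>UNIV. \<Sum>p\<in>UNIV. H b d * \<Gamma> p a b * R a' p d e)"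
  define Z3 where "Z3 = (\<Sum>b\<in>UNIV. \<Sum>d\<in>UNIV. \<Sum>p\<in>UNIV. H b d * \<Gamma> p a d * R a' b p e)"
  define Z4 where "Z4 = (\<Sum>b\<in>UNIV. \<Sum>d\<in>UNIV. \<Sum>p\<in>UNIV. H b d * \<Gamma> p a e * R a' b d p)"
  define Y1 where "Y1 = (\<Sum>b\<in>UNIV. \<Sum>d\<in>UNIV. \<Sum>p\<in>UNIV. H b p * \<Gamma> d a p * R a' b d e)"
  define Y2 where "Y2 = (\<Sum>b\<in>UNIV. \<Sum>d\<in>UNIV. \<Sum>p\<in>UNIV. \<Gamma> b a p * H p d * R a' b d e)"
  define Y3 where "Y3 = (\<Sum>h\<in>UNIV. \<Sum>p\<in>UNIV. H a' p * \<Gamma> h a p * Ric h e)"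
  define Y4 where "Y4 = (\<Sum>h\<in>UNIV. \<Sum>p\<in>UNIV. \<Gamma> a' a p * H p h * Ric h e)"
  define W1 where "W1 = (\<Sum>h\<in>UNIV. \<Sum>p\<in>UNIV. H a' h * \<Gamma> p a h * Ric p e)"
  define W2 where "W2 = (\<Sum>h\<in>UNIV. \<Sum>p\<in>UNIV. H a' h * \<Gamma> p a e * Ric h p)"
  define A where "A = (\<Sum>b\<in>UNIV. \<Sum>d\<in>UNIV. H b d * dR a a' b d e)"
  define B where "B = (\<Sum>h\<in>UNIV. H a' h * dRic a h e)"
  have LHS: "(\<Sum>b\<in>UNIV. \<Sum>d\<in>UNIV. H b d * nabla_riem \<Gamma> d\<Gamma> dd\<Gamma> a a' b d e) = A + Z1 - Z2 - Z3 - Z4"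
    unfolding A_def Z1_def Z2_def Z3_def Z4_def nabla_riem_def R_def dR_def
    by (simp add: sum_distrib_left sum.distrib sum_subtractf algebra_simps)
  have RHS: "- (\<Sum>h\<in>UNIV. H a' h * nabla2 \<Gamma> Ric dRic a h e) = - B + W1 + W2"
    unfolding B_def W1_def W2_def nabla2_def
    by (simp add: sum_distrib_left sum.distrib sum_subtractf algebra_simps)
  have DK: "A + B = Y1 + Y2 + Y3 + Y4"
  proof -
    have "(\<Sum>b\<in>UNIV. \<Sum>d\<in>UNIV. dH a b d * R a' b d e + H b d * dR a a' b d e)
           + (\<Sum>h\<in>UNIV. dH a a' h * Ric h e + H a' h * dRic a h e) = A + B - Y1 - Y2 - Y3 - Y4"
      unfolding A_def B_def Y1_def Y2_def Y3_def Y4_def dH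
      by (simp add: sum_distrib_left sum_distrib_right sum.distrib sum_subtractf algebra_simps)
    then show ?thesis using dK by simp
  qed
  have e13: "Z3 = Y1" unfolding Z3_def Y1_def by (rule sum_swap23)
  have e22: "Z2 = Y2" unfolding Z2_def Y2_def by (subst sum_swap13) (simp add: mult_ac)
  have e3: "W1 = Y3" unfolding W1_def Y3_def by (subst sum.swap) (simp add: mult_ac)
  have e41: "Y4 + Z1 = 0" and e42: "Z4 + W2 = 0"
    unfolding Y4_def Z1_def Z4_def W2_def using ginv_trace_riem_contract[OF K] by (simp_all add: add.commute)
  show ?thesis unfolding LHS RHS using DK e13 e22 e3 e41 e42 by linarith
qed

lemma contracted_second_bianchi:
  fixes \<Gamma> :: "'n::finite tensor3"
  assumes Gsym: "\<And>a c b. \<Gamma> a c b = \<Gamma> a b c"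
    and ddsym: "\<And>e f a c b. dd\<Gamma> e f a c b = dd\<Gamma> f e a c b"
  shows "nabla2 \<Gamma> (ric \<Gamma> d\<Gamma>) (dric \<Gamma> d\<Gamma> dd\<Gamma>) e b d + (\<Sum>a\<in>UNIV. nabla_riem \<Gamma> d\<Gamma> dd\<Gamma> a a b d e)
       - nabla2 \<Gamma> (ric \<Gamma> d\<Gamma>) (dric \<Gamma> d\<Gamma> dd\<Gamma>) d b e = 0"
proof -
  have "\<And>a. nabla_riem \<Gamma> d\<Gamma> dd\<Gamma> e a b a d + nabla_riem \<Gamma> d\<Gamma> dd\<Gamma> a a b d e + nabla_riem \<Gamma> d\<Gamma> dd\<Gamma> d a b e a = 0"
    by (rule second_bianchi[OF Gsym ddsym])
  then have "(\<Sum>a\<in>UNIV. nabla_riem \<Gamma> d\<Gamma> dd\<Gamma> e a b a d) + (\<Sum>a\<in>UNIV. nabla_riem \<Gamma> d\<Gamma> dd\<Gamma> a a b d e)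
     + (\<Sum>a\<in>UNIV. nabla_riem \<Gamma> d\<Gamma> dd\<Gamma> d a b e a) = 0"
    by (simp add: sum.distrib[symmetric])
  moreover have "(\<Sum>a\<in>UNIV. nabla_riem \<Gamma> d\<Gamma> dd\<Gamma> d a b e a) = - (\<Sum>a\<in>UNIV. nabla_riem \<Gamma> d\<Gamma> dd\<Gamma> d a b a e)"
    by (simp add: sum_negf[symmetric] nabla_riem_antisym[of \<Gamma> d\<Gamma> dd\<Gamma> d _ b e])
  ultimately show ?thesis using contract_nabla_riem[of \<Gamma> d\<Gamma> dd\<Gamma> e b d] contract_nabla_riem[of \<Gamma> d\<Gamma> dd\<Gamma> d b e]
    by simp
qed

lemma contracted_bianchi:
  fixes H :: "'n::finite tensor2" and dH :: "'n tensor3" and \<Gamma> :: "'n tensor3" and d\<Gamma> :: "'n tensor4" and dd\<Gamma> :: "'n tensor5"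
  defines "R \<equiv> riem \<Gamma> d\<Gamma>" and "dR \<equiv> driem \<Gamma> d\<Gamma> dd\<Gamma>" and "Ric \<equiv> ric \<Gamma> d\<Gamma>" and "dRic \<equiv> dric \<Gamma> d\<Gamma> dd\<Gamma>"
  assumes Gsym: "\<And>a c b. \<Gamma> a c b = \<Gamma> a b c"
    and ddsym: "\<And>e f a c b. dd\<Gamma> e f a c b = dd\<Gamma> f e a c b"
    and Hsym: "\<And>a b. H a b = H b a"
    and K: "\<And>a' e. (\<Sum>b\<in>UNIV. \<Sum>d\<in>UNIV. H b d * R a' b d e) + (\<Sum>h\<in>UNIV. H a' h * Ric h e) = 0"
    and dK: "\<And>a a' e. (\<Sum>b\<in>UNIV. \<Sum>d\<in>UNIV. dH a b d * R a' b d e + H b d * dR a a' b d e)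
           + (\<Sum>h\<in>UNIV. dH a a' h * Ric h e + H a' h * dRic a h e) = 0"
    and dH: "\<And>e b d. dH e b d = - (\<Sum>p\<in>UNIV. H b p * \<Gamma> d e p + \<Gamma> b e p * H p d)"
  shows "(\<Sum>b\<in>UNIV. \<Sum>d\<in>UNIV. H b d * nabla2 \<Gamma> Ric dRic d b e)
       = (1/2) * (\<Sum>b\<in>UNIV. \<Sum>d\<in>UNIV. dH e b d * Ric b d + H b d * dRic e b d)"
proof -
  have star: "nabla2 \<Gamma> Ric dRic e b d + (\<Sum>a\<in>UNIV. nabla_riem \<Gamma> d\<Gamma> dd\<Gamma> a a b d e) - nabla2 \<Gamma> Ric dRic d b e = 0"
    for b d
    unfolding Ric_def dRic_def by (rule contracted_second_bianchi[OF Gsym ddsym])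
  define S1 where "S1 = (\<Sum>b\<in>UNIV. \<Sum>d\<in>UNIV. H b d * nabla2 \<Gamma> Ric dRic e b d)"
  define S2 where "S2 = (\<Sum>b\<in>UNIV. \<Sum>d\<in>UNIV. H b d * (\<Sum>a\<in>UNIV. nabla_riem \<Gamma> d\<Gamma> dd\<Gamma> a a b d e))"
  define S3 where "S3 = (\<Sum>b\<in>UNIV. \<Sum>d\<in>UNIV. H b d * nabla2 \<Gamma> Ric dRic d b e)"
  have "S1 + S2 - S3 = (\<Sum>b\<in>UNIV. \<Sum>d\<in>UNIV. H b d * (nabla2 \<Gamma> Ric dRic e b d + (\<Sum>a\<in>UNIV. nabla_riem \<Gamma> d\<Gamma> dd\<Gamma> a a b d e) - nabla2 \<Gamma> Ric dRic d b e))"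
    unfolding S1_def S2_def S3_def by (simp add: sum.distrib sum_subtractf algebra_simps)
  also have "\<dots> = 0" using star by simp
  finally have 0: "S1 + S2 - S3 = 0" .
  have S1: "S1 = (\<Sum>b\<in>UNIV. \<Sum>d\<in>UNIV. dH e b d * Ric b d + H b d * dRic e b d)"
    unfolding S1_def using deriv_trace_eq_trace_nabla2[where dH=dH and H=H and \<Gamma>=\<Gamma> and T=Ric and dT=dRic and e=e, OF dH] by simp
  have "S2 = (\<Sum>a\<in>UNIV. \<Sum>b\<in>UNIV. \<Sum>d\<in>UNIV. H b d * nabla_riem \<Gamma> d\<Gamma> dd\<Gamma> a a b d e)"
    unfolding S2_def sum_distrib_left by (subst sum_rotate3) simp
  also have "\<dots> = (\<Sum>a\<in>UNIV. - (\<Sum>h\<in>UNIV. H a h * nabla2 \<Gamma> Ric dRic a h e))"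
    using ginv_trace_nabla_riem[OF K[unfolded R_def Ric_def] dK[unfolded R_def Ric_def dR_def dRic_def] dH]
    unfolding Ric_def dRic_def by simp
  also have "\<dots> = - S3"
  proof -
    have "(\<Sum>a\<in>UNIV. \<Sum>h\<in>UNIV. H a h * nabla2 \<Gamma> Ric dRic a h e) = (\<Sum>h\<in>UNIV. \<Sum>a\<in>UNIV. H h a * nabla2 \<Gamma> Ric dRic a h e)"
      by (subst sum.swap) (simp add: Hsym)
    then show ?thesis unfolding S3_def by (simp add: sum_negf)
  qed
  finally have "S2 = - S3" .
  then show ?thesis using 0 S1 unfolding S3_def by simp
qed

definition hess_jet :: "'n::finite tensor3 \<Rightarrow> ('n \<Rightarrow> real) \<Rightarrow> 'n tensor2 \<Rightarrow> 'n \<Rightarrow> 'n \<Rightarrow> real" where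
  "hess_jet \<Gamma> f1 f2 i j = f2 i j - (\<Sum>p\<in>UNIV. \<Gamma> p i j * f1 p)"

definition dhess_jet :: "'n::finite tensor3 \<Rightarrow> 'n tensor4 \<Rightarrow> ('n \<Rightarrow> real) \<Rightarrow> 'n tensor2 \<Rightarrow> 'n tensor3 \<Rightarrow> 'n \<Rightarrow> 'n \<Rightarrow> 'n \<Rightarrow> real" where
  "dhess_jet \<Gamma> d\<Gamma> f1 f2 f3 k i j = f3 k i j - (\<Sum>p\<in>UNIV. d\<Gamma> k p i j * f1 p + \<Gamma> p i j * f2 k p)"

lemma ricci_identity:
  fixes \<Gamma> :: "'n::finite tensor3"
  assumes Gsym: "\<And>a c b. \<Gamma> a c b = \<Gamma> a b c"
    and f3sym: "\<And>k j i. f3 k j i = f3 j k i"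
  shows "nabla2 \<Gamma> (hess_jet \<Gamma> f1 f2) (dhess_jet \<Gamma> d\<Gamma> f1 f2 f3) k j i - nabla2 \<Gamma> (hess_jet \<Gamma> f1 f2) (dhess_jet \<Gamma> d\<Gamma> f1 f2 f3) j k i
       = - (\<Sum>q\<in>UNIV. f1 q * riem \<Gamma> d\<Gamma> q i k j)"
proof -
  have g1: "\<And>p. \<Gamma> p j k = \<Gamma> p k j" using Gsym by auto
  have sw1: "(\<Sum>p\<in>UNIV. \<Sum>q\<in>UNIV. \<Gamma> p k i * \<Gamma> q j p * f1 q) = (\<Sum>q\<in>UNIV. \<Sum>p\<in>UNIV. f1 q * \<Gamma> q j p * \<Gamma> p k i)"
    by (subst sum.swap) (simp add: mult_ac)
  have sw2: "(\<Sum>p\<in>UNIV. \<Sum>q\<in>UNIV. \<Gamma> p j i * \<Gamma> q k p * f1 q) = (\<Sum>q\<in>UNIV. \<Sum>p\<in>UNIV. f1 q * \<Gamma> q k p * \<Gamma> p j i)"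
    by (subst sum.swap) (simp add: mult_ac)
  show ?thesis
    unfolding nabla2_def hess_jet_def dhess_jet_def riem_def
    using sw1 sw2
    by (simp add: f3sym[of k j i] g1 sum.distrib sum_subtractf sum_distrib_left sum_distrib_right algebra_simps)
qed

lemma nabla2_hess_sym:
  fixes \<Gamma> :: "'n::finite tensor3"
  assumes Gsym: "\<And>a c b. \<Gamma> a c b = \<Gamma> a b c"
    and dGsym: "\<And>e a c b. d\<Gamma> e a c b = d\<Gamma> e a b c"
    and f2sym: "\<And>i j. f2 i j = f2 j i"
    and f3sym: "\<And>k i j. f3 k i j = f3 k j i"
  shows "nabla2 \<Gamma> (hess_jet \<Gamma> f1 f2) (dhess_jet \<Gamma> d\<Gamma> f1 f2 f3) k i j = nabla2 \<Gamma> (hess_jet \<Gamma> f1 f2) (dhess_jet \<Gamma> d\<Gamma> f1 f2 f3) k j i"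
proof -
  have hs: "hess_jet \<Gamma> f1 f2 a b = hess_jet \<Gamma> f1 f2 b a" for a b
    unfolding hess_jet_def by (simp add: f2sym[of a b] Gsym[of _ a b])
  have ds: "dhess_jet \<Gamma> d\<Gamma> f1 f2 f3 k i j = dhess_jet \<Gamma> d\<Gamma> f1 f2 f3 k j i"
    unfolding dhess_jet_def by (simp add: f3sym[of k i j] Gsym[of _ i j] dGsym[of k _ i j])
  have "(\<Sum>p\<in>UNIV. \<Gamma> p k i * hess_jet \<Gamma> f1 f2 p j + \<Gamma> p k j * hess_jet \<Gamma> f1 f2 i p)
      = (\<Sum>p\<in>UNIV. \<Gamma> p k j * hess_jet \<Gamma> f1 f2 p i + \<Gamma> p k i * hess_jet \<Gamma> f1 f2 j p)"
    by (intro sum.cong refl) (simp add: hs[of _ j] hs[of i])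
  then show ?thesis unfolding nabla2_def using ds by simp
qed

lemma div_hess_jet:
  fixes \<Gamma> :: "'n::finite tensor3" and H :: "'n tensor2"
  assumes Gsym: "\<And>a c b. \<Gamma> a c b = \<Gamma> a b c"
    and dGsym: "\<And>e a c b. d\<Gamma> e a c b = d\<Gamma> e a b c"
    and f2sym: "\<And>i j. f2 i j = f2 j i"
    and f3sym: "\<And>k i j. f3 k i j = f3 k j i"
    and f3sym2: "\<And>k j i. f3 k j i = f3 j k i"
    and K: "\<And>a' e. (\<Sum>b\<in>UNIV. \<Sum>d\<in>UNIV. H b d * riem \<Gamma> d\<Gamma> a' b d e) + (\<Sum>h\<in>UNIV. H a' h * ric \<Gamma> d\<Gamma> h e) = 0"
    and Hsym: "\<And>a b. H a b = H b a"
    and Rsym: "\<And>a b. ric \<Gamma> d\<Gamma> a b = ric \<Gamma> d\<Gamma> b a"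
  shows "(\<Sum>i\<in>UNIV. \<Sum>k\<in>UNIV. H i k * nabla2 \<Gamma> (hess_jet \<Gamma> f1 f2) (dhess_jet \<Gamma> d\<Gamma> f1 f2 f3) k i j)
       - (\<Sum>i\<in>UNIV. \<Sum>k\<in>UNIV. H i k * nabla2 \<Gamma> (hess_jet \<Gamma> f1 f2) (dhess_jet \<Gamma> d\<Gamma> f1 f2 f3) j i k)
       = (\<Sum>h\<in>UNIV. ric \<Gamma> d\<Gamma> j h * (\<Sum>q\<in>UNIV. H h q * f1 q))"
proof -
  let ?N = "nabla2 \<Gamma> (hess_jet \<Gamma> f1 f2) (dhess_jet \<Gamma> d\<Gamma> f1 f2 f3)"
  have "(\<Sum>i\<in>UNIV. \<Sum>k\<in>UNIV. H i k * ?N k i j) - (\<Sum>i\<in>UNIV. \<Sum>k\<in>UNIV. H i k * ?N j i k)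
      = (\<Sum>i\<in>UNIV. \<Sum>k\<in>UNIV. H i k * (?N k j i - ?N j k i))"
  proof -
    have e1: "(\<Sum>i\<in>UNIV. \<Sum>k\<in>UNIV. H i k * ?N k i j) = (\<Sum>i\<in>UNIV. \<Sum>k\<in>UNIV. H i k * ?N k j i)"
      by (intro sum.cong refl) (subst nabla2_hess_sym[OF Gsym dGsym f2sym f3sym], rule refl)
    have e2: "(\<Sum>i\<in>UNIV. \<Sum>k\<in>UNIV. H i k * ?N j i k) = (\<Sum>i\<in>UNIV. \<Sum>k\<in>UNIV. H i k * ?N j k i)"
      by (intro sum.cong refl) (subst nabla2_hess_sym[OF Gsym dGsym f2sym f3sym], rule refl)
    show ?thesis unfolding e1 e2 by (simp add: sum_subtractf right_diff_distrib)
  qed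
  also have "\<dots> = (\<Sum>i\<in>UNIV. \<Sum>k\<in>UNIV. H i k * (- (\<Sum>q\<in>UNIV. f1 q * riem \<Gamma> d\<Gamma> q i k j)))"
    by (simp only: ricci_identity[OF Gsym f3sym2])
  also have "\<dots> = - (\<Sum>q\<in>UNIV. f1 q * (\<Sum>i\<in>UNIV. \<Sum>k\<in>UNIV. H i k * riem \<Gamma> d\<Gamma> q i k j))"
    by (simp add: sum_distrib_left sum_negf) (subst sum_rotate3, simp add: mult_ac)
  also have "\<dots> = (\<Sum>q\<in>UNIV. f1 q * (\<Sum>h\<in>UNIV. H q h * ric \<Gamma> d\<Gamma> h j))"
  proof -
    have "\<And>q. (\<Sum>i\<in>UNIV. \<Sum>k\<in>UNIV. H i k * riem \<Gamma> d\<Gamma> q i k j) = - (\<Sum>h\<in>UNIV. H q h * ric \<Gamma> d\<Gamma> h j)"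
      using K by (simp add: eq_neg_iff_add_eq_0)
    then show ?thesis by (simp add: sum_negf)
  qed
  also have "\<dots> = (\<Sum>h\<in>UNIV. ric \<Gamma> d\<Gamma> j h * (\<Sum>q\<in>UNIV. H h q * f1 q))"
    unfolding sum_distrib_left by (subst sum.swap) (simp add: Hsym Rsym mult_ac)
  finally show ?thesis .
qed

lemma div_scaled_metric:
  fixes \<Gamma> dG :: "'n::finite tensor3" and H G :: "'n tensor2"
  assumes compat: "\<And>c a b. dG c a b = (\<Sum>p\<in>UNIV. \<Gamma> p c a * G p b + \<Gamma> p c b * G a p)"
    and HG: "\<And>a c. (\<Sum>b\<in>UNIV. H a b * G b c) = (if a = c then 1 else 0)"
    and Hsym: "\<And>a b. H a b = H b a"
  shows "(\<Sum>i\<in>UNIV. \<Sum>k\<in>UNIV. H i k * nabla2 \<Gamma> (\<lambda>i j. phi * G i j) (\<lambda>k i j. dphi k * G i j + phi * dG k i j) k i j) = dphi j"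
proof -
  have "nabla2 \<Gamma> (\<lambda>i j. phi * G i j) (\<lambda>k i j. dphi k * G i j + phi * dG k i j) k i j = dphi k * G i j" for k i
    unfolding nabla2_def compat[of k i j] by (simp add: sum_distrib_left sum.distrib algebra_simps)
  then have "(\<Sum>i\<in>UNIV. \<Sum>k\<in>UNIV. H i k * nabla2 \<Gamma> (\<lambda>i j. phi * G i j) (\<lambda>k i j. dphi k * G i j + phi * dG k i j) k i j)
     = (\<Sum>i\<in>UNIV. \<Sum>k\<in>UNIV. H i k * (dphi k * G i j))" by simp
  also have "\<dots> = (\<Sum>k\<in>UNIV. \<Sum>i\<in>UNIV. H i k * (dphi k * G i j))" by (rule sum.swap)
  also have "\<dots> = (\<Sum>k\<in>UNIV. dphi k * (\<Sum>i\<in>UNIV. H k i * G i j))"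
  proof (intro sum.cong refl)
    fix k show "(\<Sum>i\<in>UNIV. H i k * (dphi k * G i j)) = dphi k * (\<Sum>i\<in>UNIV. H k i * G i j)"
      by (simp add: sum_distrib_left Hsym[of _ k] mult_ac)
  qed
  finally show ?thesis by (simp add: HG)
qed

section \<open>Curvature of the chart metric\<close>

context riemannian_chart
begin

lemma smooth_on_simps [simp]:
  "smooth_on U (\<lambda>y. c)"
  "smooth_on U a \<Longrightarrow> smooth_on U b \<Longrightarrow> smooth_on U (\<lambda>y. a y + b y)"
  "smooth_on U a \<Longrightarrow> smooth_on U b \<Longrightarrow> smooth_on U (\<lambda>y. a y - b y)"
  "smooth_on U a \<Longrightarrow> smooth_on U b \<Longrightarrow> smooth_on U (\<lambda>y. a y * b y)"
  "(\<And>j. smooth_on U (h j)) \<Longrightarrow> smooth_on U (\<lambda>y. \<Sum>j\<in>(UNIV::'b::finite set). h j y)"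
  "smooth_on U a \<Longrightarrow> smooth_on U (pd i a)"
  "smooth_on U a \<Longrightarrow> smooth_on U (\<lambda>y. a y / c)"
  using open_U
  by (auto intro: smooth_on_const smooth_on_add smooth_on_diff smooth_on_mult smooth_on_sum smooth_on_pd
      simp: divide_inverse)

lemma pd_simps:
  "y \<in> U \<Longrightarrow> smooth_on U a \<Longrightarrow> smooth_on U b \<Longrightarrow> pd i (\<lambda>z. a z + b z) y = pd i a y + pd i b y"
  "y \<in> U \<Longrightarrow> smooth_on U a \<Longrightarrow> smooth_on U b \<Longrightarrow> pd i (\<lambda>z. a z - b z) y = pd i a y - pd i b y"
  "y \<in> U \<Longrightarrow> smooth_on U a \<Longrightarrow> smooth_on U b \<Longrightarrow> pd i (\<lambda>z. a z * b z) y = pd i a y * b y + a y * pd i b y"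
  "y \<in> U \<Longrightarrow> (\<And>j. smooth_on U (h j)) \<Longrightarrow>
     pd i (\<lambda>z. \<Sum>j\<in>(UNIV::'b::finite set). h j z) y = (\<Sum>j\<in>UNIV. pd i (h j) y)"
  "y \<in> U \<Longrightarrow> smooth_on U a \<Longrightarrow> pd i (\<lambda>z. a z / c) y = pd i a y / c"
  using pd_mult[of a y "\<lambda>z. inverse c" i]
  by (auto intro!: pd_add pd_diff pd_mult pd_sum smooth_on_differentiable simp: divide_inverse)

lemma pd_cong: "y \<in> U \<Longrightarrow> (\<And>z. z \<in> U \<Longrightarrow> a z = b z) \<Longrightarrow> pd i a y = pd i b y"
  using pd_cong_open[OF open_U] by blast

lemma pd_commute_on: "smooth_on U h \<Longrightarrow> y \<in> U \<Longrightarrow> pd j (pd i h) y = pd i (pd j h) y"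
  by (rule pd_commute[OF open_U]) (auto intro: smooth_on_differentiable smooth_on_pd)

lemma christoffel_smooth [simp]: "smooth_on U (christoffel g k i j)"
proof -
  have "christoffel g k i j = (\<lambda>x. (1/2) * (\<Sum>l\<in>UNIV. ginv g x $ k $ l *
      (pd i (\<lambda>y. g y $ j $ l) x + pd j (\<lambda>y. g y $ i $ l) x - pd l (\<lambda>y. g y $ i $ j) x)))"
    by (simp add: fun_eq_iff christoffel_def)
  moreover have "smooth_on U \<dots>" by simp
  ultimately show ?thesis by simp
qed

definition "met y = (\<lambda>a b. g y $ a $ b)"
definition "imet y = (\<lambda>a b. ginv g y $ a $ b)"
definition "dmet y = (\<lambda>c a b. pd c (\<lambda>z. g z $ a $ b) y)"
definition "ddmet y = (\<lambda>d c a b. pd d (pd c (\<lambda>z. g z $ a $ b)) y)"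
definition "dimet y = (\<lambda>c a b. pd c (\<lambda>z. ginv g z $ a $ b) y)"
definition "chris y = (\<lambda>k i j. christoffel g k i j y)"
definition "dchris y = (\<lambda>l k i j. pd l (christoffel g k i j) y)"
definition "ddchris y = (\<lambda>m l k i j. pd m (pd l (christoffel g k i j)) y)"

lemma met_sym: "y \<in> U \<Longrightarrow> met y a b = met y b a"
  unfolding met_def by (rule metric_sym)

lemma imet_sym: "y \<in> U \<Longrightarrow> imet y a b = imet y b a"
  unfolding imet_def by (rule ginv_sym)

lemma imet_met: "y \<in> U \<Longrightarrow> (\<Sum>b\<in>UNIV. imet y a b * met y b c) = (if a = c then 1 else 0)"
  unfolding imet_def met_def by (rule ginv_metric_contract)

lemma met_imet: "y \<in> U \<Longrightarrow> (\<Sum>b\<in>UNIV. met y a b * imet y b c) = (if a = c then 1 else 0)"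
  unfolding imet_def met_def by (rule metric_ginv_contract)

lemma dmet_sym: "y \<in> U \<Longrightarrow> dmet y c a b = dmet y c b a"
  unfolding dmet_def using metric_sym by (intro pd_cong) auto

lemma chris_eq: "chris y k i j = 1/2 * (\<Sum>l\<in>UNIV. imet y k l * (dmet y i j l + dmet y j i l - dmet y l i j))"
  unfolding chris_def imet_def dmet_def christoffel_def by simp

lemma chris_sym: "y \<in> U \<Longrightarrow> chris y k i j = chris y k j i"
  unfolding chris_eq using dmet_sym by (simp add: algebra_simps)

lemma dchris_sym: "y \<in> U \<Longrightarrow> dchris y l k i j = dchris y l k j i"
  unfolding dchris_def using chris_sym unfolding chris_def by (intro pd_cong) auto

lemma ddchris_sym: "y \<in> U \<Longrightarrow> ddchris y m l k i j = ddchris y l m k i j"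
  unfolding ddchris_def by (rule pd_commute_on) auto

lemma ddmet_sym: "y \<in> U \<Longrightarrow> ddmet y d c a b = ddmet y c d a b"
  unfolding ddmet_def by (rule pd_commute_on) auto

lemma dmet_compat: "y \<in> U \<Longrightarrow> dmet y c a b = (\<Sum>p\<in>UNIV. chris y p c a * met y p b + chris y p c b * met y a p)"
  by (rule metric_compatibility[OF met_sym imet_sym imet_met dmet_sym chris_eq])

lemma ddmet_compat:
  assumes "y \<in> U"
  shows "ddmet y d c a b = (\<Sum>p\<in>UNIV. dchris y d p c a * met y p b + chris y p c a * dmet y d p b
                                      + dchris y d p c b * met y a p + chris y p c b * dmet y d a p)"
proof -
  have "ddmet y d c a b = pd d (\<lambda>z. \<Sum>p\<in>UNIV. christoffel g p c a z * g z $ p $ b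
                                            + christoffel g p c b z * g z $ a $ p) y"
    unfolding ddmet_def using dmet_compat unfolding dmet_def chris_def met_def
    by (intro pd_cong[OF assms]) auto
  also have "\<dots> = (\<Sum>p\<in>UNIV. dchris y d p c a * met y p b + chris y p c a * dmet y d p b
                                      + dchris y d p c b * met y a p + chris y p c b * dmet y d a p)"
    using assms by (simp add: pd_simps dchris_def chris_def met_def dmet_def add.assoc)
  finally show ?thesis .
qed

lemma dimet_met:
  assumes "y \<in> U"
  shows "(\<Sum>l\<in>UNIV. dimet y c a l * met y l b + imet y a l * dmet y c l b) = 0"
proof -
  have "0 = pd c (\<lambda>z. (if a = b then 1 else 0)) y" by simp
  also have "\<dots> = pd c (\<lambda>z. \<Sum>l\<in>UNIV. ginv g z $ a $ l * g z $ l $ b) y"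
    using ginv_metric_contract by (intro pd_cong[OF assms]) auto
  also have "\<dots> = (\<Sum>l\<in>UNIV. dimet y c a l * met y l b + imet y a l * dmet y c l b)"
    using assms by (simp add: pd_simps dimet_def met_def imet_def dmet_def)
  finally show ?thesis by simp
qed

lemma dimet_eq: "y \<in> U \<Longrightarrow> dimet y c a m = - (\<Sum>p\<in>UNIV. imet y a p * chris y m c p + chris y a c p * imet y p m)"
  by (rule inverse_metric_deriv[OF met_imet imet_met dimet_met dmet_compat])

definition "riem_fun a b c d = (\<lambda>z. pd c (christoffel g a d b) z - pd d (christoffel g a c b) z
   + (\<Sum>p\<in>UNIV. christoffel g a c p z * christoffel g p d b z - christoffel g a d p z * christoffel g p c b z))"

lemma riem_fun_eq: "riem_fun a b c d y = riem (chris y) (dchris y) a b c d"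
  unfolding riem_fun_def riem_def chris_def dchris_def by simp

lemma riem_fun_smooth [simp]: "smooth_on U (riem_fun a b c d)"
  unfolding riem_fun_def by simp

lemma pd_riem_fun: "y \<in> U \<Longrightarrow> pd e (riem_fun a b c d) y = driem (chris y) (dchris y) (ddchris y) e a b c d"
  unfolding riem_fun_def driem_def chris_def dchris_def ddchris_def
  by (simp add: pd_simps algebra_simps sum_subtractf sum.distrib)

lemma ricci_smooth [simp]: "smooth_on U (ricci g i j)"
proof -
  have "ricci g i j = (\<lambda>x. \<Sum>k\<in>UNIV. pd k (christoffel g k i j) x - pd j (christoffel g k i k) x
      + (\<Sum>l\<in>UNIV. christoffel g k k l x * christoffel g l i j x - christoffel g k j l x * christoffel g l i k x))"
    by (simp add: fun_eq_iff ricci_def)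
  moreover have "smooth_on U \<dots>" by simp
  ultimately show ?thesis by simp
qed

lemma ricci_eq_sum_riem_fun:
  assumes "y \<in> U"
  shows "ricci g b d y = (\<Sum>a\<in>UNIV. riem_fun a b a d y)"
proof -
  have "dchris y a a b d = dchris y a a d b" "dchris y d a b a = dchris y d a a b"
    "chris y l b d = chris y l d b" "chris y l b a = chris y l a b" for a l
    using dchris_sym[OF assms] chris_sym[OF assms] by auto
  then show ?thesis unfolding ricci_def riem_fun_eq riem_def chris_def dchris_def by simp
qed

lemma ricci_eq_ric: "y \<in> U \<Longrightarrow> ricci g b d y = ric (chris y) (dchris y) b d"
  using ricci_eq_sum_riem_fun unfolding ric_def riem_fun_eq by simp

lemma pd_ricci: 
  assumes "y \<in> U"
  shows "pd e (ricci g b d) y = dric (chris y) (dchris y) (ddchris y) e b d"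
proof -
  have "pd e (ricci g b d) y = pd e (\<lambda>z. \<Sum>a\<in>UNIV. riem_fun a b a d z) y"
    using ricci_eq_sum_riem_fun by (intro pd_cong[OF assms]) auto
  also have "\<dots> = dric (chris y) (dchris y) (ddchris y) e b d"
    using assms by (simp add: pd_simps pd_riem_fun dric_def)
  finally show ?thesis .
qed

lemma ginv_trace_riem_at:
  "y \<in> U \<Longrightarrow> (\<Sum>b\<in>UNIV. \<Sum>d\<in>UNIV. imet y b d * riem (chris y) (dchris y) a b d e)
      + (\<Sum>h\<in>UNIV. imet y a h * ric (chris y) (dchris y) h e) = 0"
  by (rule ginv_trace_riem[OF imet_met imet_sym riem_lowered_antisym[OF met_sym dmet_compat ddmet_compat ddmet_sym]])

lemma ric_sym_at: "y \<in> U \<Longrightarrow> ric (chris y) (dchris y) b d = ric (chris y) (dchris y) d b"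
  by (rule ric_sym[OF imet_met imet_sym riem_lowered_antisym[OF met_sym dmet_compat ddmet_compat ddmet_sym]
        chris_sym dchris_sym])

lemma pd_ginv_trace_riem_at:
  assumes "y \<in> U"
  shows "(\<Sum>b\<in>UNIV. \<Sum>d\<in>UNIV. dimet y a b d * riem (chris y) (dchris y) a' b d e
              + imet y b d * driem (chris y) (dchris y) (ddchris y) a a' b d e)
       + (\<Sum>h\<in>UNIV. dimet y a a' h * ric (chris y) (dchris y) h e
              + imet y a' h * dric (chris y) (dchris y) (ddchris y) a h e) = 0"
proof -
  have "0 = pd a (\<lambda>z. 0) y" by simp
  also have "\<dots> = pd a (\<lambda>z. (\<Sum>b\<in>UNIV. \<Sum>d\<in>UNIV. ginv g z $ b $ d * riem_fun a' b d e z)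
                   + (\<Sum>h\<in>UNIV. ginv g z $ a' $ h * ricci g h e z)) y"
  proof (rule pd_cong[OF assms])
    fix z assume z: "z \<in> U"
    show "0 = (\<Sum>b\<in>UNIV. \<Sum>d\<in>UNIV. ginv g z $ b $ d * riem_fun a' b d e z)
              + (\<Sum>h\<in>UNIV. ginv g z $ a' $ h * ricci g h e z)"
      using ginv_trace_riem_at[OF z, of a' e] unfolding imet_def riem_fun_eq ricci_eq_ric[OF z] by simp
  qed
  also have "\<dots> = (\<Sum>b\<in>UNIV. \<Sum>d\<in>UNIV. dimet y a b d * riem (chris y) (dchris y) a' b d e
              + imet y b d * driem (chris y) (dchris y) (ddchris y) a a' b d e)
       + (\<Sum>h\<in>UNIV. dimet y a a' h * ric (chris y) (dchris y) h e
              + imet y a' h * dric (chris y) (dchris y) (ddchris y) a h e)"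
    using assms by (simp add: pd_simps pd_riem_fun pd_ricci dimet_def imet_def)
      (simp add: ricci_eq_ric[OF assms] riem_fun_eq)
  finally show ?thesis by simp
qed

lemma scal_smooth [simp]: "smooth_on U (scal g)"
proof -
  have "scal g = (\<lambda>x. \<Sum>i\<in>UNIV. \<Sum>j\<in>UNIV. ginv g x $ i $ j * ricci g i j x)"
    by (simp add: fun_eq_iff scal_def)
  moreover have "smooth_on U \<dots>" by simp
  ultimately show ?thesis by simp
qed

lemma pd_scal:
  "y \<in> U \<Longrightarrow> pd e (scal g) y = (\<Sum>b\<in>UNIV. \<Sum>d\<in>UNIV. dimet y e b d * ric (chris y) (dchris y) b d
     + imet y b d * dric (chris y) (dchris y) (ddchris y) e b d)"
  unfolding scal_def[abs_def] by (simp add: pd_simps pd_ricci ricci_eq_ric dimet_def imet_def)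

lemma contracted_bianchi_at:
  "y \<in> U \<Longrightarrow> (\<Sum>b\<in>UNIV. \<Sum>d\<in>UNIV. imet y b d
      * nabla2 (chris y) (ric (chris y) (dchris y)) (dric (chris y) (dchris y) (ddchris y)) d b e)
    = (1/2) * pd e (scal g) y"
  unfolding pd_scal
  by (rule contracted_bianchi[OF chris_sym ddchris_sym imet_sym ginv_trace_riem_at pd_ginv_trace_riem_at dimet_eq])

end

section \<open>Hessian and Laplacian\<close>

context riemannian_chart
begin

definition "d1 f y = (\<lambda>p. pd p f y)"
definition "d2 f y = (\<lambda>i j. pd i (pd j f) y)"
definition "d3 f y = (\<lambda>k i j. pd k (pd i (pd j f)) y)"

lemma hess_eq_hess_jet: "hess g f i j y = hess_jet (chris y) (d1 f y) (d2 f y) i j"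
  unfolding hess_def hess_jet_def chris_def d1_def d2_def by simp

lemma hess_smooth [simp]: "smooth_on U f \<Longrightarrow> smooth_on U (hess g f i j)"
  unfolding hess_def[abs_def] by simp

lemma pd_hess:
  "smooth_on U f \<Longrightarrow> y \<in> U \<Longrightarrow>
     pd k (hess g f i j) y = dhess_jet (chris y) (dchris y) (d1 f y) (d2 f y) (d3 f y) k i j"
  unfolding hess_def[abs_def] dhess_jet_def chris_def dchris_def d1_def d2_def d3_def
  by (simp add: pd_simps sum.distrib)

lemma d2_sym: "smooth_on U f \<Longrightarrow> y \<in> U \<Longrightarrow> d2 f y i j = d2 f y j i"
  unfolding d2_def by (rule pd_commute_on)

lemma d3_sym: "smooth_on U f \<Longrightarrow> y \<in> U \<Longrightarrow> d3 f y k i j = d3 f y k j i"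
  unfolding d3_def using d2_sym unfolding d2_def by (intro pd_cong) auto

lemma d3_sym': "smooth_on U f \<Longrightarrow> y \<in> U \<Longrightarrow> d3 f y k j i = d3 f y j k i"
  unfolding d3_def by (rule pd_commute_on) auto

lemma laplacian_smooth [simp]: "smooth_on U f \<Longrightarrow> smooth_on U (laplacian g f)"
  unfolding laplacian_def[abs_def] by simp

lemma pd_laplacian:
  assumes "smooth_on U f" "y \<in> U"
  shows "pd e (laplacian g f) y = (\<Sum>b\<in>UNIV. \<Sum>d\<in>UNIV. imet y b d
     * nabla2 (chris y) (hess_jet (chris y) (d1 f y) (d2 f y))
         (dhess_jet (chris y) (dchris y) (d1 f y) (d2 f y) (d3 f y)) e b d)"
proof -
  have "pd e (laplacian g f) y = (\<Sum>b\<in>UNIV. \<Sum>d\<in>UNIV. dimet y e b d * hess_jet (chris y) (d1 f y) (d2 f y) b d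
     + imet y b d * dhess_jet (chris y) (dchris y) (d1 f y) (d2 f y) (d3 f y) e b d)"
    unfolding laplacian_def[abs_def] using assms
    by (simp add: pd_simps pd_hess dimet_def imet_def) (simp add: hess_eq_hess_jet)
  then show ?thesis
    using deriv_trace_eq_trace_nabla2[OF dimet_eq[OF assms(2)]] by simp
qed

lemma div_hess_at:
  "smooth_on U f \<Longrightarrow> y \<in> U \<Longrightarrow>
    (\<Sum>i\<in>UNIV. \<Sum>k\<in>UNIV. imet y i k * nabla2 (chris y) (hess_jet (chris y) (d1 f y) (d2 f y))
        (dhess_jet (chris y) (dchris y) (d1 f y) (d2 f y) (d3 f y)) k i j)
  - (\<Sum>i\<in>UNIV. \<Sum>k\<in>UNIV. imet y i k * nabla2 (chris y) (hess_jet (chris y) (d1 f y) (d2 f y))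
        (dhess_jet (chris y) (dchris y) (d1 f y) (d2 f y) (d3 f y)) j i k)
  = (\<Sum>h\<in>UNIV. ric (chris y) (dchris y) j h * (\<Sum>q\<in>UNIV. imet y h q * d1 f y q))"
  by (rule div_hess_jet[OF chris_sym dchris_sym d2_sym d3_sym d3_sym' ginv_trace_riem_at imet_sym ric_sym_at])

lemma trace_imet_met:
  assumes "y \<in> U"
  shows "(\<Sum>i\<in>UNIV. \<Sum>j\<in>UNIV. imet y i j * met y i j) = real CARD('n)"
proof -
  have "(\<Sum>i\<in>UNIV. \<Sum>j\<in>UNIV. imet y i j * met y i j) = (\<Sum>i\<in>UNIV. \<Sum>j\<in>UNIV. imet y i j * met y j i)"
    using met_sym[OF assms] by simp
  also have "\<dots> = (\<Sum>i\<in>(UNIV::'n set). 1)" using imet_met[OF assms] by simp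
  finally show ?thesis by simp
qed

end

section \<open>Gradient almost Einstein solitons\<close>

locale gradient_almost_einstein_soliton = riemannian_chart U g
    for U :: "(real^'n::finite) set" and g :: "'n metric" +
  fixes f lam :: "'n scalarf"
  assumes smooth_f: "smooth_on U f" and smooth_lam: "smooth_on U lam"
    and soliton: "x \<in> U \<Longrightarrow> hess g f i j x + ricci g i j x = (scal g x / 2 + lam x) * g x $ i $ j"
begin

lemma laplacian_soliton:
  assumes "x \<in> U"
  shows "laplacian g f x = real CARD('n) * (scal g x / 2 + lam x) - scal g x"
proof -
  have "hess g f i j x = (scal g x / 2 + lam x) * met x i j - ricci g i j x" for i j
    using soliton[OF assms, of i j] unfolding met_def by (simp add: eq_diff_eq)
  then have "laplacian g f x
      = (\<Sum>i\<in>UNIV. \<Sum>j\<in>UNIV. imet x i j * ((scal g x / 2 + lam x) * met x i j - ricci g i j x))"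
    unfolding laplacian_def imet_def by simp
  also have "\<dots> = (scal g x / 2 + lam x) * (\<Sum>i\<in>UNIV. \<Sum>j\<in>UNIV. imet x i j * met x i j)
      - (\<Sum>i\<in>UNIV. \<Sum>j\<in>UNIV. imet x i j * ricci g i j x)"
    by (simp add: sum_subtractf sum_distrib_left algebra_simps)
  also have "(\<Sum>i\<in>UNIV. \<Sum>j\<in>UNIV. imet x i j * ricci g i j x) = scal g x"
    unfolding scal_def imet_def ..
  finally show ?thesis using trace_imet_met[OF assms] by simp
qed


lemma pd_laplacian_soliton:
  assumes "x \<in> U"
  shows "pd j (laplacian g f) x = real CARD('n) * (pd j (scal g) x / 2 + pd j lam x) - pd j (scal g) x"
proof -
  have "pd j (laplacian g f) x = pd j (\<lambda>z. real CARD('n) * (scal g z / 2 + lam z) - scal g z) x"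
    using laplacian_soliton by (intro pd_cong[OF assms]) auto
  also have "\<dots> = real CARD('n) * (pd j (scal g) x / 2 + pd j lam x) - pd j (scal g) x"
    using assms smooth_lam by (simp add: pd_simps)
  finally show ?thesis .
qed

end


context gradient_almost_einstein_soliton
begin

lemma ric_grad_soliton:
  assumes x: "x \<in> U"
  shows "(\<Sum>h\<in>UNIV. ric (chris x) (dchris x) j h * (\<Sum>q\<in>UNIV. imet x h q * d1 f x q))
       = pd j lam x - pd j (laplacian g f) x"
proof -
  define \<phi> where "\<phi> z = scal g z / 2 + lam z" for z
  have d\<phi>: "pd j \<phi> x = pd j (scal g) x / 2 + pd j lam x" for j
    unfolding \<phi>_def using x smooth_lam by (simp add: pd_simps)
  let ?T1 = "hess_jet (chris x) (d1 f x) (d2 f x)"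
  let ?D1 = "dhess_jet (chris x) (dchris x) (d1 f x) (d2 f x) (d3 f x)"
  let ?T2 = "ric (chris x) (dchris x)"
  let ?D2 = "dric (chris x) (dchris x) (ddchris x)"
  let ?div = "\<lambda>N. \<Sum>i\<in>UNIV. \<Sum>k\<in>UNIV. imet x i k * N k i j"
  have T: "?T1 i k + ?T2 i k = \<phi> x * met x i k" for i k
    using soliton[OF x] unfolding \<phi>_def met_def
    by (simp add: hess_eq_hess_jet[symmetric] ricci_eq_ric[OF x, symmetric])
  have D: "?D1 l i k + ?D2 l i k = pd l \<phi> x * met x i k + \<phi> x * dmet x l i k" for l i k
  proof -
    have "?D1 l i k + ?D2 l i k = pd l (\<lambda>z. hess g f i k z + ricci g i k z) x"
      using smooth_f x by (simp add: pd_simps pd_hess pd_ricci)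
    also have "\<dots> = pd l (\<lambda>z. \<phi> z * g z $ i $ k) x"
      using soliton unfolding \<phi>_def by (intro pd_cong[OF x]) auto
    also have "\<dots> = pd l \<phi> x * met x i k + \<phi> x * dmet x l i k"
      using x smooth_lam unfolding \<phi>_def by (simp add: pd_simps met_def dmet_def)
    finally show ?thesis .
  qed
  have N: "nabla2 (chris x) ?T1 ?D1 l i k + nabla2 (chris x) ?T2 ?D2 l i k
      = nabla2 (chris x) (\<lambda>i k. \<phi> x * met x i k) (\<lambda>l i k. pd l \<phi> x * met x i k + \<phi> x * dmet x l i k) l i k"
    for l i k
    unfolding nabla2_add T D ..
  have "?div (nabla2 (chris x) ?T1 ?D1) + ?div (nabla2 (chris x) ?T2 ?D2)
      = (\<Sum>i\<in>UNIV. \<Sum>k\<in>UNIV. imet x i k * (nabla2 (chris x) ?T1 ?D1 k i j + nabla2 (chris x) ?T2 ?D2 k i j))"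
    by (simp add: sum.distrib distrib_left)
  also have "\<dots> = ?div (nabla2 (chris x) (\<lambda>i k. \<phi> x * met x i k)
                              (\<lambda>l i k. pd l \<phi> x * met x i k + \<phi> x * dmet x l i k))"
    unfolding N ..
  also have "\<dots> = pd j \<phi> x"
    by (rule div_scaled_metric[OF dmet_compat[OF x] imet_met[OF x] imet_sym[OF x]])
  finally have div_soliton: "?div (nabla2 (chris x) ?T1 ?D1) + ?div (nabla2 (chris x) ?T2 ?D2) = pd j \<phi> x" .
  have div_ric: "?div (nabla2 (chris x) ?T2 ?D2) = pd j (scal g) x / 2"
    using contracted_bianchi_at[OF x] by simp
  have "(\<Sum>i\<in>UNIV. \<Sum>k\<in>UNIV. imet x i k * nabla2 (chris x) ?T1 ?D1 j i k) = pd j (laplacian g f) x"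
    using pd_laplacian[OF smooth_f x] by simp
  then show ?thesis
    using div_hess_at[OF smooth_f x, of j] div_soliton div_ric d\<phi>[of j] by linarith
qed

lemma ricci_op_grad_soliton:
  assumes x: "x \<in> U"
  shows "ricci_op g x (grad g f x) = grad g lam x - grad g (laplacian g f) x"
proof -
  have "ricci_op g x (grad g f x) $ i
      = (\<Sum>j\<in>UNIV. imet x i j * (\<Sum>h\<in>UNIV. ric (chris x) (dchris x) j h * (\<Sum>q\<in>UNIV. imet x h q * d1 f x q)))"
    for i
    unfolding ricci_op_def grad_def imet_def d1_def
    by (simp add: ricci_eq_ric[OF x] sum_distrib_left mult.assoc)
  also have "\<dots> i = (\<Sum>j\<in>UNIV. imet x i j * (pd j lam x - pd j (laplacian g f) x))" for i
    by (simp only: ric_grad_soliton[OF x])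
  also have "\<dots> i = (grad g lam x - grad g (laplacian g f) x) $ i" for i
    unfolding grad_def imet_def by (simp add: right_diff_distrib sum_subtractf)
  finally show ?thesis by (simp add: vec_eq_iff)
qed

lemma grad_laplacian_soliton:
  assumes x: "x \<in> U"
  shows "grad g (laplacian g f) x
       = real CARD('n) *\<^sub>R grad g lam x + ((real CARD('n) - 2) / 2) *\<^sub>R grad g (scal g) x"
proof -
  have "pd j (laplacian g f) x = real CARD('n) * pd j lam x + (real CARD('n) - 2) / 2 * pd j (scal g) x" for j
    unfolding pd_laplacian_soliton[OF x] by (simp add: field_simps)
  then show ?thesis
    unfolding vec_eq_iff grad_def by (simp add: distrib_left sum.distrib sum_distrib_left mult_ac)
qed

end

theorem proposition2p4:
  fixes U :: "(real^'n::finite) set" and g :: "'n metric"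
    and f lam :: "'n scalarf"
  assumes "CARD('n) \<ge> 3"
    and "open U"
    and "riemannian_metric_on U g"
    and "smooth_on U f" and "smooth_on U lam"
    and "\<forall>x\<in>U. grad g f x \<noteq> 0"
    and "\<forall>x\<in>U. \<forall>i j. hess g f i j x + ricci g i j x = (scal g x / 2 + lam x) * g x $ i $ j"
  shows "(\<forall>x\<in>U. ricci_op g x (grad g f x)
            = - (real CARD('n) - 1) *\<^sub>R grad g lam x
              - ((real CARD('n) - 2) / 2) *\<^sub>R grad g (scal g) x)
       \<and> ((\<forall>x\<in>U. ricci_op g x (grad g f x) = 0) \<longrightarrow>
            (\<forall>x\<in>U. grad g lam x = grad g (laplacian g f) x
               \<and> grad g (laplacian g f) x
                   = - ((real CARD('n) - 2) / (2 * (real CARD('n) - 1))) *\<^sub>R grad g (scal g) x))"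
proof -
  interpret gradient_almost_einstein_soliton U g f lam
    using assms(2-5,7) by unfold_locales auto
  define n where "n = real CARD('n)"
  have Q: "ricci_op g x (grad g f x) = - (n - 1) *\<^sub>R grad g lam x - ((n - 2) / 2) *\<^sub>R grad g (scal g) x"
    if "x \<in> U" for x
    using ricci_op_grad_soliton[OF that] grad_laplacian_soliton[OF that]
    unfolding n_def by (simp add: algebra_simps)
  have "grad g lam x = grad g (laplacian g f) x
      \<and> grad g (laplacian g f) x = - ((n - 2) / (2 * (n - 1))) *\<^sub>R grad g (scal g) x"
    if "ricci_op g x (grad g f x) = 0" "x \<in> U" for x
  proof -
    have "grad g lam x = grad g (laplacian g f) x"
      using ricci_op_grad_soliton[OF that(2)] that(1) by simp
    moreover have "n - 1 \<noteq> 0" using assms(1) by (simp add: n_def)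
    then have "grad g lam x = - ((n - 2) / (2 * (n - 1))) *\<^sub>R grad g (scal g) x"
      using Q[OF that(2)] that(1) unfolding vec_eq_iff by (simp add: field_simps)
    ultimately show ?thesis by simp
  qed
  with Q show ?thesis unfolding n_def by blast
qed

end
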